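(* Let $T$ be a random draft tree of depth $D$ generated by Greedy sampling (as described in the context), and let UniVer be run on $T$. Then UniVer is lossless: for every integer $L \ge D+1$ and every sequence $o=(o_0,o_1,\dots,o_L)$ with $o_0=r$ and $o_1,\dots,o_L\in\Sigma$, $$\sum_{T} p_{\rm draft}(T)\sum_{o'}\frac{\mathcal{M}_b(o)\,\Pr[\mathrm{UniVer}=o'\mid T]}{\mathcal{M}_b(o')}=\mathcal{M}_b(o),$$ where $o'$ ranges over all prefixes $o'=(o_0,\dots,o_\ell)$, $1\le \ell\le L$, of $o$ (including $o$ itself).
   Context: Let $\Sigma$ be a finite vocabulary. A target model and a draft model are given by conditional distributions $\mathcal{M}_b(\cdot\mid x)$ and $\mathcal{M}_s(\cdot\mid x)$ on $\Sigma$ for every context $x$ (a fixed current context followed by a finite sequence of tokens). For $x\in\mathbb{R}$, $[x]_+=\max\{x,0\}$. Draft tree. A draft tree $T$ has a fixed rooted topology of depth $D$ (root $r$ at depth $0$; each non-leaf node has a fixed number of children). The root $r$ represents the current context; every other node carries a token of $\Sigma$, and a node $v$ is identified with the token sequence along the path from $r$ to $v$, so $\mathcal{M}_b(\cdot\mid v),\mathcal{M}_s(\cdot\mid v)$ are the conditional distributions given that sequence. Tokens are generated top-down by Greedy sampling: if a non-leaf $v$ has $m$ children, its children $\mathcal{C}(v)=\{u_1,\dots,u_m\}$ consist of $u_1,\dots,u_{m-1}$, the $m-1$ most probable tokens under $\mathcal{M}_s(\cdot\mid v)$ (set $H_v=\{u_1,\dots,u_{m-1}\}$, ties broken by a fixed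 rule), and $u_m$ drawn from the residual distribution $\mathcal{M}_s^\neg(\cdot\mid v)$, defined by $\mathcal{M}_s^\neg(x\mid v)=\mathcal{M}_s(x\mid v)/\sum_{y\notin H_v}\mathcal{M}_s(y\mid v)$ for $x\notin H_v$ and $\mathcal{M}_s^\neg(x\mid v)=0$ for $x\in H_v$. $p_{\rm draft}$ denotes the resulting distribution over draft trees. UniVer, Allocation Phase: set $\tilde p_r=1$. Top-down, for each non-leaf $v$ with already computed $\tilde p_v$, let $Z_v=1-\tilde p_v+\sum_{x\in\Sigma}[\tilde p_v\mathcal{M}_b(x\mid v)-\mathcal{M}_s^\neg(x\mid v)]_+$, $p_v(u_m)=\min\{1,\tilde p_v\mathcal{M}_b(u_m\mid v)/\mathcal{M}_s^\neg(u_m\mid v)\}$, and for every $u\in\Sigma\setminus\{u_m\}$, $p_v(u)=[\tilde p_v\mathcal{M}_b(u\mid v)-\mathcal{M}_s^\neg(u\mid v)]_+\,(1-p_v(u_m))/Z_v$; let $p_v(\neg v)=1-\sum_{u\in\Sigma}p_v(u)$. Then set $\tilde p_{u_j}=p_v(u_j)/(1-\sum_{i<j}p_v(u_i))$ for $j=1,\dots,m$ and $\tilde p_v^{\rm res}=1-p_v(\neg v)/(1-\sum_{i=1}^m p_v(u_i))$. UniVer, Decision Phase: draw independent $\eta_v\sim U(0,1)$ for all nodes and visit nodes in post-order (for each node, recursively visit the subtrees of $u_1,\dots,u_m$ in this order, then the node itself). At a leaf $v$: if $\eta_v<\tilde p_v$, stop and output the path sequence of $v$ followed by $y\sim\mathcal{M}_b(\cdot\mid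 v)$. At a non-leaf $v$: if $\eta_v<\tilde p_v^{\rm res}$, stop and output the path sequence of $v$ followed by $y\in\Sigma\setminus\mathcal{C}(v)$ sampled with probability $p_v(y)/\sum_{u\notin\mathcal{C}(v)}p_v(u)$. Otherwise continue to the next node. For $o=(o_0,\dots,o_\ell)$ with $o_0=r$, $\mathcal{M}_b(o)=\prod_{i=1}^{\ell}\mathcal{M}_b(o_i\mid o_0,\dots,o_{i-1})$. $\Pr[\mathrm{UniVer}=o'\mid T]$ is the probability that UniVer outputs exactly the sequence $o'$ on tree $T$. *)

theory Defs
  imports Complex_Main "HOL-Library.FuncSet"
begin

text \<open>Nodes are addressed by positions: lists of 0-based
  child indices from the root; the root is the empty position.\<close>

datatype topo = Nd "topo list"

primrec kids :: "topo \<Rightarrow> topo list" where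
  "kids (Nd ts) = ts"

primrec height :: "topo \<Rightarrow> nat" and height_list :: "topo list \<Rightarrow> nat" where
  "height (Nd ts) = height_list ts"
| "height_list [] = 0"
| "height_list (t # ts) = max (Suc (height t)) (height_list ts)"

primrec postorder :: "topo \<Rightarrow> nat list list"
  and postorder_list :: "nat \<Rightarrow> topo list \<Rightarrow> nat list list" where
  "postorder (Nd ts) = postorder_list 0 ts @ [[]]"
| "postorder_list i [] = []"
| "postorder_list i (t # ts) = map ((#) i) (postorder t) @ postorder_list (Suc i) ts"

fun subtopo :: "topo \<Rightarrow> nat list \<Rightarrow> topo" where
  "subtopo t [] = t"
| "subtopo t (i # p) = subtopo (kids t ! i) p"

definition nch :: "topo \<Rightarrow> nat list \<Rightarrow> nat" where
  "nch t p = length (kids (subtopo t p))"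

text \<open>A draft tree of topology t is a token labelling of the non-root positions.\<close>
definition draft_trees :: "topo \<Rightarrow> (nat list \<Rightarrow> 'a) set" where
  "draft_trees t = PiE (set (postorder t) - {[]}) (\<lambda>_. UNIV)"

text \<open>Token sequence along the path from the root to the node at position v.\<close>
definition tokpath :: "(nat list \<Rightarrow> 'a) \<Rightarrow> nat list \<Rightarrow> 'a list" where
  "tokpath lab v = map (\<lambda>k. lab (take k v)) [1..<Suc (length v)]"

definition seqprob :: "('a list \<Rightarrow> 'a \<Rightarrow> real) \<Rightarrow> 'a list \<Rightarrow> real" where
  "seqprob M os = (\<Prod>i<length os. M (take i os) (os ! i))"

definition pos_part :: "real \<Rightarrow> real" where
  "pos_part x = max x 0"

definition res_dist :: "('a::finite list \<Rightarrow> 'a \<Rightarrow> real) \<Rightarrow> 'a set \<Rightarrow> 'a list \<Rightarrow> 'a \<Rightarrow> real" where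
  "res_dist Ms H ctx x = (if x \<in> H then 0 else Ms ctx x / (\<Sum>y\<in>UNIV - H. Ms ctx y))"

text \<open>Greedy-sampling probability of a draft tree.  gtop ctx k is the
  (fixed, tie-broken) list of the k most probable tokens under Ms(.|ctx).\<close>
definition pdraft :: "('a::finite list \<Rightarrow> 'a \<Rightarrow> real) \<Rightarrow> ('a list \<Rightarrow> nat \<Rightarrow> 'a list)
    \<Rightarrow> topo \<Rightarrow> (nat list \<Rightarrow> 'a) \<Rightarrow> real" where
  "pdraft Ms gtop t lab =
     (\<Prod>v\<in>{v \<in> set (postorder t). 0 < nch t v}.
        (let ctx = tokpath lab v; m = nch t v in
         if map (\<lambda>i. lab (v @ [i])) [0..<m - 1] = gtop ctx (m - 1)
         then res_dist Ms (set (gtop ctx (m - 1))) ctx (lab (v @ [m - 1]))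
         else 0))"

text \<open>Allocation at a non-leaf v with already computed value pt (p-tilde):
  returns the function u \<mapsto> p_v(u).\<close>
definition alloc :: "('a::finite list \<Rightarrow> 'a \<Rightarrow> real) \<Rightarrow> ('a list \<Rightarrow> 'a \<Rightarrow> real)
    \<Rightarrow> ('a list \<Rightarrow> nat \<Rightarrow> 'a list) \<Rightarrow> topo \<Rightarrow> (nat list \<Rightarrow> 'a) \<Rightarrow> nat list \<Rightarrow> real \<Rightarrow> 'a \<Rightarrow> real" where
  "alloc Mb Ms gtop t lab v pt =
     (let ctx = tokpath lab v; m = nch t v; H = set (gtop ctx (m - 1));
          um = lab (v @ [m - 1]); R = res_dist Ms H ctx;
          Z = 1 - pt + (\<Sum>x\<in>UNIV. pos_part (pt * Mb ctx x - R x));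
          pum = min 1 (pt * Mb ctx um / R um)
      in (\<lambda>u. if u = um then pum else pos_part (pt * Mb ctx u - R u) * (1 - pum) / Z))"

text \<open>p-tilde of the (j+1)-th child of v, given p-tilde of v.\<close>
definition child_ptil :: "('a::finite list \<Rightarrow> 'a \<Rightarrow> real) \<Rightarrow> ('a list \<Rightarrow> 'a \<Rightarrow> real)
    \<Rightarrow> ('a list \<Rightarrow> nat \<Rightarrow> 'a list) \<Rightarrow> topo \<Rightarrow> (nat list \<Rightarrow> 'a) \<Rightarrow> nat list \<Rightarrow> real \<Rightarrow> nat \<Rightarrow> real" where
  "child_ptil Mb Ms gtop t lab v pt j =
     (let p = alloc Mb Ms gtop t lab v pt
      in p (lab (v @ [j])) / (1 - (\<Sum>i<j. p (lab (v @ [i])))))"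

fun ptil_from :: "('a::finite list \<Rightarrow> 'a \<Rightarrow> real) \<Rightarrow> ('a list \<Rightarrow> 'a \<Rightarrow> real)
    \<Rightarrow> ('a list \<Rightarrow> nat \<Rightarrow> 'a list) \<Rightarrow> topo \<Rightarrow> (nat list \<Rightarrow> 'a) \<Rightarrow> nat list \<Rightarrow> real \<Rightarrow> nat list \<Rightarrow> real" where
  "ptil_from Mb Ms gtop t lab v pt [] = pt"
| "ptil_from Mb Ms gtop t lab v pt (j # js) =
     ptil_from Mb Ms gtop t lab (v @ [j]) (child_ptil Mb Ms gtop t lab v pt j) js"

definition ptil :: "('a::finite list \<Rightarrow> 'a \<Rightarrow> real) \<Rightarrow> ('a list \<Rightarrow> 'a \<Rightarrow> real)
    \<Rightarrow> ('a list \<Rightarrow> nat \<Rightarrow> 'a list) \<Rightarrow> topo \<Rightarrow> (nat list \<Rightarrow> 'a) \<Rightarrow> nat list \<Rightarrow> real" where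
  "ptil Mb Ms gtop t lab p = ptil_from Mb Ms gtop t lab [] 1 p"

definition pres :: "('a::finite list \<Rightarrow> 'a \<Rightarrow> real) \<Rightarrow> ('a list \<Rightarrow> 'a \<Rightarrow> real)
    \<Rightarrow> ('a list \<Rightarrow> nat \<Rightarrow> 'a list) \<Rightarrow> topo \<Rightarrow> (nat list \<Rightarrow> 'a) \<Rightarrow> nat list \<Rightarrow> real" where
  "pres Mb Ms gtop t lab v =
     (let p = alloc Mb Ms gtop t lab v (ptil Mb Ms gtop t lab v); m = nch t v
      in 1 - (1 - (\<Sum>u\<in>UNIV. p u)) / (1 - (\<Sum>i<m. p (lab (v @ [i])))))"

text \<open>Stopping threshold of node v in the decision phase.\<close>
definition stopq :: "('a::finite list \<Rightarrow> 'a \<Rightarrow> real) \<Rightarrow> ('a list \<Rightarrow> 'a \<Rightarrow> real)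
    \<Rightarrow> ('a list \<Rightarrow> nat \<Rightarrow> 'a list) \<Rightarrow> topo \<Rightarrow> (nat list \<Rightarrow> 'a) \<Rightarrow> nat list \<Rightarrow> real" where
  "stopq Mb Ms gtop t lab v =
     (if nch t v = 0 then ptil Mb Ms gtop t lab v else pres Mb Ms gtop t lab v)"

text \<open>Pr[eta < q] for eta ~ U(0,1).\<close>
definition unif_lt :: "real \<Rightarrow> real" where
  "unif_lt q = max 0 (min 1 q)"

text \<open>Probability of emitting token y after stopping at node v.\<close>
definition emit :: "('a::finite list \<Rightarrow> 'a \<Rightarrow> real) \<Rightarrow> ('a list \<Rightarrow> 'a \<Rightarrow> real)
    \<Rightarrow> ('a list \<Rightarrow> nat \<Rightarrow> 'a list) \<Rightarrow> topo \<Rightarrow> (nat list \<Rightarrow> 'a) \<Rightarrow> nat list \<Rightarrow> 'a \<Rightarrow> real" where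
  "emit Mb Ms gtop t lab v y =
     (if nch t v = 0 then Mb (tokpath lab v) y
      else (let p = alloc Mb Ms gtop t lab v (ptil Mb Ms gtop t lab v);
                C = (\<lambda>i. lab (v @ [i])) ` {..<nch t v}
            in if y \<in> C then 0 else p y / (\<Sum>u\<in>UNIV - C. p u)))"

text \<open>Pr[UniVer = o' | T]: nodes are visited in post-order with independent
  uniform thresholds; the output after stopping at v is tokpath v followed by
  the emitted token.\<close>
definition univer_prob :: "('a::finite list \<Rightarrow> 'a \<Rightarrow> real) \<Rightarrow> ('a list \<Rightarrow> 'a \<Rightarrow> real)
    \<Rightarrow> ('a list \<Rightarrow> nat \<Rightarrow> 'a list) \<Rightarrow> topo \<Rightarrow> (nat list \<Rightarrow> 'a) \<Rightarrow> 'a list \<Rightarrow> real" where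
  "univer_prob Mb Ms gtop t lab os =
     (let po = postorder t in
      \<Sum>i<length po.
        (\<Prod>j<i. 1 - unif_lt (stopq Mb Ms gtop t lab (po ! j)))
        * unif_lt (stopq Mb Ms gtop t lab (po ! i))
        * (if length os = Suc (length (po ! i)) \<and> take (length (po ! i)) os = tokpath lab (po ! i)
           then emit Mb Ms gtop t lab (po ! i) (last os) else 0))"

end

theory Submission
  imports Defs
begin

text \<open>Losslessness is proved by induction on the topology, for every start value \<open>pt \<in> [0, 1]\<close> of
  p-tilde at the root and every shift of the context.  Three facts are carried along: the draft
  distribution is normalised, the decision phase stops nowhere with probability \<open>1 - pt\<close>, and its
  output, continued by \<open>M\<^sub>b\<close>, has \<open>pt\<close> times the law of \<open>M\<^sub>b\<close>.  At a node \<open>v\<close>, averaging the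
  allocation \<open>p\<^sub>v\<close> over the residual draw of the last child gives exactly \<open>pt * M\<^sub>b(\<cdot> | v)\<close>.  The
  subtrees of the children are visited one after the other; by induction the subtree of \<open>u\<^sub>j\<close>,
  started at \<open>p\<^sub>v(u\<^sub>j) / (1 - (\<Sum>i<j. p\<^sub>v(u\<^sub>i)))\<close>, stops with exactly this conditional
  probability, and its output is then \<open>u\<^sub>j\<close> continued by \<open>M\<^sub>b\<close>.  So the children realise \<open>p\<^sub>v\<close> on
  themselves, and the residual stop at \<open>v\<close> realises it on the remaining tokens.  The theorem is
  the case \<open>pt = 1\<close>, tested against the conditional probability of completing a prefix to \<open>o\<close>.\<close>

type_synonym 'a model = "'a list \<Rightarrow> 'a \<Rightarrow> real"
type_synonym 'a top_lists = "'a list \<Rightarrow> nat \<Rightarrow> 'a list"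
type_synonym 'a labelling = "nat list \<Rightarrow> 'a"

section \<open>Passing to a subtree\<close>

definition shift_ctx :: "'a \<Rightarrow> ('a list \<Rightarrow> 'b) \<Rightarrow> 'a list \<Rightarrow> 'b" where
  "shift_ctx a M = (\<lambda>ctx. M (a # ctx))"

lemma shift_ctx_apply: "shift_ctx a M ctx = M (a # ctx)"
  by (simp add: shift_ctx_def)

definition sublab :: "(nat list \<Rightarrow> 'a) \<Rightarrow> nat \<Rightarrow> nat list \<Rightarrow> 'a" where
  "sublab lab i = (\<lambda>p. lab (i # p))"

lemma sublab_apply: "sublab lab i p = lab (i # p)"
  by (simp add: sublab_def)

lemma tokpath_Nil [simp]: "tokpath lab [] = []"
  by (simp add: tokpath_def)

lemma length_tokpath [simp]: "length (tokpath lab v) = length v"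
  unfolding tokpath_def by (simp only: length_map length_upt)

lemma tokpath_Cons: "tokpath lab (i # p) = lab [i] # tokpath (sublab lab i) p"
  unfolding tokpath_def
  by (simp add: upt_conv_Cons map_Suc_upt[symmetric] sublab_apply del: upt_Suc)

lemma tokpath_root_upd [simp]: "tokpath (lab([] := x)) v = tokpath lab v"
  unfolding tokpath_def by (rule map_cong[OF refl]) auto

lemma nch_Nd_Nil [simp]: "nch (Nd ts) [] = length ts"
  by (simp add: nch_def)

lemma nch_Nd_Cons [simp]: "nch (Nd ts) (i # p) = nch (ts ! i) p"
  by (simp add: nch_def)

lemma res_dist_Cons: "res_dist Ms H (a # ctx) = res_dist (shift_ctx a Ms) H ctx"
  by (simp add: res_dist_def fun_eq_iff shift_ctx_apply)

lemma alloc_Cons: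
  "alloc Mb Ms gtop (Nd ts) lab (i # v) =
   alloc (shift_ctx (lab [i]) Mb) (shift_ctx (lab [i]) Ms) (shift_ctx (lab [i]) gtop) (ts ! i) (sublab lab i) v"
  unfolding alloc_def Let_def
  by (simp add: tokpath_Cons res_dist_Cons fun_eq_iff sublab_apply shift_ctx_apply)

lemma child_ptil_Cons:
  "child_ptil Mb Ms gtop (Nd ts) lab (i # v) =
   child_ptil (shift_ctx (lab [i]) Mb) (shift_ctx (lab [i]) Ms) (shift_ctx (lab [i]) gtop) (ts ! i) (sublab lab i) v"
  unfolding child_ptil_def Let_def by (simp add: alloc_Cons sublab_apply fun_eq_iff)

lemma ptil_from_Cons:
  "ptil_from Mb Ms gtop (Nd ts) lab (i # v) q p =
   ptil_from (shift_ctx (lab [i]) Mb) (shift_ctx (lab [i]) Ms) (shift_ctx (lab [i]) gtop) (ts ! i) (sublab lab i) v q p"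
  by (induction p arbitrary: v q) (simp_all add: child_ptil_Cons)

lemma alloc_root_upd [simp]: "alloc Mb Ms gtop t (lab([] := x)) = alloc Mb Ms gtop t lab"
  unfolding alloc_def Let_def by (simp add: fun_eq_iff)

lemma child_ptil_root_upd [simp]: "child_ptil Mb Ms gtop t (lab([] := x)) = child_ptil Mb Ms gtop t lab"
  unfolding child_ptil_def Let_def by (simp add: fun_eq_iff)

lemma ptil_from_root_upd [simp]:
  "ptil_from Mb Ms gtop t (lab([] := x)) v q p = ptil_from Mb Ms gtop t lab v q p"
  by (induction p arbitrary: v q) simp_all

lemma pdraft_root_upd [simp]: "pdraft Ms gtop t (lab([] := x)) = pdraft Ms gtop t lab"
  unfolding pdraft_def Let_def by (intro prod.cong refl) simp

text \<open>UniVer with the root value of p-tilde generalised from 1 to \<open>pt\<close>: a subtree of the draft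
  tree is then again an instance, started at the p-tilde its root received from its parent.\<close>

definition ptil_init :: "'a::finite model \<Rightarrow> 'a model \<Rightarrow> 'a top_lists \<Rightarrow> topo \<Rightarrow> 'a labelling
    \<Rightarrow> real \<Rightarrow> nat list \<Rightarrow> real" where
  "ptil_init Mb Ms gtop t lab pt p = ptil_from Mb Ms gtop t lab [] pt p"

definition pres_init :: "'a::finite model \<Rightarrow> 'a model \<Rightarrow> 'a top_lists \<Rightarrow> topo \<Rightarrow> 'a labelling
    \<Rightarrow> real \<Rightarrow> nat list \<Rightarrow> real" where
  "pres_init Mb Ms gtop t lab pt v =
     (let p = alloc Mb Ms gtop t lab v (ptil_init Mb Ms gtop t lab pt v); m = nch t v
      in 1 - (1 - (\<Sum>u\<in>UNIV. p u)) / (1 - (\<Sum>i<m. p (lab (v @ [i])))))"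

definition stop_prob :: "'a::finite model \<Rightarrow> 'a model \<Rightarrow> 'a top_lists \<Rightarrow> topo \<Rightarrow> 'a labelling
    \<Rightarrow> real \<Rightarrow> nat list \<Rightarrow> real" where
  "stop_prob Mb Ms gtop t lab pt v =
     unif_lt (if nch t v = 0 then ptil_init Mb Ms gtop t lab pt v else pres_init Mb Ms gtop t lab pt v)"

definition emit_init :: "'a::finite model \<Rightarrow> 'a model \<Rightarrow> 'a top_lists \<Rightarrow> topo \<Rightarrow> 'a labelling
    \<Rightarrow> real \<Rightarrow> nat list \<Rightarrow> 'a \<Rightarrow> real" where
  "emit_init Mb Ms gtop t lab pt v y =
     (if nch t v = 0 then Mb (tokpath lab v) y
      else (let p = alloc Mb Ms gtop t lab v (ptil_init Mb Ms gtop t lab pt v);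
                C = (\<lambda>i. lab (v @ [i])) ` {..<nch t v}
            in if y \<in> C then 0 else p y / (\<Sum>u\<in>UNIV - C. p u)))"

definition emit_value :: "'a::finite model \<Rightarrow> 'a model \<Rightarrow> 'a top_lists \<Rightarrow> topo \<Rightarrow> 'a labelling
    \<Rightarrow> real \<Rightarrow> ('a list \<Rightarrow> real) \<Rightarrow> nat list \<Rightarrow> real" where
  "emit_value Mb Ms gtop t lab pt \<Phi> v =
     (\<Sum>y\<in>UNIV. emit_init Mb Ms gtop t lab pt v y * \<Phi> (tokpath lab v @ [y]))"

lemma ptil_eq_ptil_init: "ptil Mb Ms gtop t lab = ptil_init Mb Ms gtop t lab 1"
  by (simp add: ptil_def ptil_init_def fun_eq_iff)

lemma unif_lt_stopq: "unif_lt (stopq Mb Ms gtop t lab v) = stop_prob Mb Ms gtop t lab 1 v"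
  by (simp add: stopq_def stop_prob_def pres_def pres_init_def ptil_eq_ptil_init)

lemma emit_eq_emit_init: "emit Mb Ms gtop t lab v y = emit_init Mb Ms gtop t lab 1 v y"
  by (simp add: emit_def emit_init_def ptil_eq_ptil_init)

lemma ptil_init_Nil [simp]: "ptil_init Mb Ms gtop t lab pt [] = pt"
  by (simp add: ptil_init_def)

lemma ptil_init_Cons:
  "ptil_init Mb Ms gtop (Nd ts) lab pt (i # p) =
   ptil_init (shift_ctx (lab [i]) Mb) (shift_ctx (lab [i]) Ms) (shift_ctx (lab [i]) gtop) (ts ! i) (sublab lab i)
     (child_ptil Mb Ms gtop (Nd ts) lab [] pt i) p"
  by (simp add: ptil_init_def ptil_from_Cons)

lemma pres_init_Cons:
  "pres_init Mb Ms gtop (Nd ts) lab pt (i # p) =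
   pres_init (shift_ctx (lab [i]) Mb) (shift_ctx (lab [i]) Ms) (shift_ctx (lab [i]) gtop) (ts ! i) (sublab lab i)
     (child_ptil Mb Ms gtop (Nd ts) lab [] pt i) p"
  unfolding pres_init_def Let_def by (simp add: ptil_init_Cons alloc_Cons sublab_apply)

lemma stop_prob_Cons:
  "stop_prob Mb Ms gtop (Nd ts) lab pt (i # p) =
   stop_prob (shift_ctx (lab [i]) Mb) (shift_ctx (lab [i]) Ms) (shift_ctx (lab [i]) gtop) (ts ! i) (sublab lab i)
     (child_ptil Mb Ms gtop (Nd ts) lab [] pt i) p"
  unfolding stop_prob_def by (simp add: ptil_init_Cons pres_init_Cons)

lemma emit_init_Cons:
  "emit_init Mb Ms gtop (Nd ts) lab pt (i # p) y =
   emit_init (shift_ctx (lab [i]) Mb) (shift_ctx (lab [i]) Ms) (shift_ctx (lab [i]) gtop) (ts ! i) (sublab lab i)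
     (child_ptil Mb Ms gtop (Nd ts) lab [] pt i) p y"
  unfolding emit_init_def Let_def
  by (simp add: ptil_init_Cons alloc_Cons tokpath_Cons sublab_apply shift_ctx_apply)

lemma emit_value_Cons:
  "emit_value Mb Ms gtop (Nd ts) lab pt \<Phi> (i # p) =
   emit_value (shift_ctx (lab [i]) Mb) (shift_ctx (lab [i]) Ms) (shift_ctx (lab [i]) gtop) (ts ! i) (sublab lab i)
     (child_ptil Mb Ms gtop (Nd ts) lab [] pt i) (\<lambda>w. \<Phi> (lab [i] # w)) p"
  unfolding emit_value_def by (simp add: emit_init_Cons tokpath_Cons)

lemma ptil_init_root_upd [simp]: "ptil_init Mb Ms gtop t (lab([] := x)) = ptil_init Mb Ms gtop t lab"
  by (simp add: ptil_init_def fun_eq_iff)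

lemma stop_prob_root_upd [simp]: "stop_prob Mb Ms gtop t (lab([] := x)) = stop_prob Mb Ms gtop t lab"
  by (simp add: stop_prob_def pres_init_def fun_eq_iff)

lemma emit_init_root_upd [simp]: "emit_init Mb Ms gtop t (lab([] := x)) = emit_init Mb Ms gtop t lab"
  by (simp add: emit_init_def fun_eq_iff)

lemma emit_value_root_upd [simp]: "emit_value Mb Ms gtop t (lab([] := x)) = emit_value Mb Ms gtop t lab"
  by (simp add: emit_value_def fun_eq_iff)

lemma postorder_list_eq:
  "postorder_list k ts = concat (map (\<lambda>i. map ((#) (k + i)) (postorder (ts ! i))) [0..<length ts])"
  by (induction ts arbitrary: k) (simp_all add: upt_conv_Cons map_Suc_upt[symmetric] o_def del: upt_Suc)

lemma postorder_Nd:
  "postorder (Nd ts) = concat (map (\<lambda>i. map ((#) i) (postorder (ts ! i))) [0..<length ts]) @ [[]]"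
  by (simp add: postorder_list_eq)

declare postorder.simps(1) [simp del]

lemma set_postorder_Nd:
  "v \<in> set (postorder (Nd ts)) \<longleftrightarrow>
   v = [] \<or> (\<exists>i p. v = i # p \<and> i < length ts \<and> p \<in> set (postorder (ts ! i)))"
  by (auto simp: postorder_Nd)

lemma Nil_in_postorder [simp]: "[] \<in> set (postorder t)"
  by (cases t) (simp add: set_postorder_Nd)

lemma height_nth: "i < length ts \<Longrightarrow> Suc (height (ts ! i)) \<le> height (Nd ts)"
proof (induction ts arbitrary: i)
  case (Cons t ts)
  then show ?case by (cases i) fastforce+
qed simp

lemma length_postorder_le: "v \<in> set (postorder t) \<Longrightarrow> length v \<le> height t"
proof (induction t arbitrary: v)
  case (Nd ts)
  show ?case
  proof (cases v)
    case (Cons i p)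
    with Nd.prems have i: "i < length ts" and p: "p \<in> set (postorder (ts ! i))"
      by (auto simp: set_postorder_Nd)
    with Nd.IH[OF nth_mem[OF i] p] height_nth[OF i] Cons show ?thesis by simp
  qed simp
qed

section \<open>Sequential stopping\<close>

fun stopping_value :: "('v \<Rightarrow> real) \<Rightarrow> ('v \<Rightarrow> real) \<Rightarrow> 'v list \<Rightarrow> real" where
  "stopping_value q e [] = 0"
| "stopping_value q e (v # vs) = q v * e v + (1 - q v) * stopping_value q e vs"

fun survival :: "('v \<Rightarrow> real) \<Rightarrow> 'v list \<Rightarrow> real" where
  "survival q [] = 1"
| "survival q (v # vs) = (1 - q v) * survival q vs"

lemma survival_append: "survival q (xs @ ys) = survival q xs * survival q ys"
  by (induction xs) simp_all

lemma stopping_value_append: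
  "stopping_value q e (xs @ ys) = stopping_value q e xs + survival q xs * stopping_value q e ys"
  by (induction xs) (simp_all add: algebra_simps)

lemma survival_map: "survival q (map f xs) = survival (q \<circ> f) xs"
  by (induction xs) simp_all

lemma stopping_value_map: "stopping_value q e (map f xs) = stopping_value (q \<circ> f) (e \<circ> f) xs"
  by (induction xs) simp_all

lemma stopping_value_cong:
  "(\<And>v. v \<in> set xs \<Longrightarrow> e v = e' v) \<Longrightarrow> stopping_value q e xs = stopping_value q e' xs"
  by (induction xs) simp_all

lemma survival_concat_upt: "survival q (concat (map F [0..<m])) = (\<Prod>i<m. survival q (F i))"
  by (induction m) (simp_all add: survival_append)

lemma stopping_value_concat_upt:
  "stopping_value q e (concat (map F [0..<m])) =
   (\<Sum>i<m. (\<Prod>j<i. survival q (F j)) * stopping_value q e (F i))"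
  by (induction m) (simp_all add: stopping_value_append survival_append survival_concat_upt)

lemma stopping_value_sum:
  "finite S \<Longrightarrow> stopping_value q (\<lambda>v. \<Sum>l\<in>S. f l v) xs = (\<Sum>l\<in>S. stopping_value q (f l) xs)"
  by (induction xs) (simp_all add: sum.distrib sum_distrib_left)

lemma stopping_value_scale: "stopping_value q (\<lambda>v. c * e v) xs = c * stopping_value q e xs"
  by (induction xs) (simp_all add: algebra_simps)

lemma stopping_value_eq_sum:
  "stopping_value q e xs = (\<Sum>i<length xs. (\<Prod>j<i. 1 - q (xs ! j)) * q (xs ! i) * e (xs ! i))"
proof (induction xs)
  case (Cons x xs)
  have "(\<Sum>i<length (x # xs). (\<Prod>j<i. 1 - q ((x # xs) ! j)) * q ((x # xs) ! i) * e ((x # xs) ! i))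
      = q x * e x + (\<Sum>i<length xs. (\<Prod>j<Suc i. 1 - q ((x # xs) ! j)) * q (xs ! i) * e (xs ! i))"
    by (simp add: sum.lessThan_Suc_shift del: sum.lessThan_Suc)
  also have "\<dots> = q x * e x + (1 - q x) * (\<Sum>i<length xs. (\<Prod>j<i. 1 - q (xs ! j)) * q (xs ! i) * e (xs ! i))"
    by (simp add: prod.lessThan_Suc_shift sum_distrib_left mult.assoc del: prod.lessThan_Suc)
  finally show ?case using Cons by simp
qed simp

lemma prod_lessThan_split:
  fixes F :: "nat \<Rightarrow> 'b::comm_monoid_mult"
  assumes "i < m"
  shows "(\<Prod>k<m. F k) = (\<Prod>k<i. F k) * F i * (\<Prod>k\<in>{Suc i..<m}. F k)"
proof -
  have "(\<Prod>k<m. F k) = (\<Prod>k\<in>{0..<i}. F k) * (\<Prod>k\<in>{i..<m}. F k)"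
    using assms by (simp add: prod.atLeastLessThan_concat lessThan_atLeast0)
  also have "(\<Prod>k\<in>{i..<m}. F k) = F i * (\<Prod>k\<in>{Suc i..<m}. F k)"
    using assms by (simp add: prod.atLeast_Suc_lessThan)
  finally show ?thesis by (simp add: lessThan_atLeast0 mult.assoc)
qed

text \<open>Sequential stopping over independently drawn components \<open>g i\<close>: the expectation factors.\<close>

lemma sum_PiE_sequential:
  fixes w P U :: "nat \<Rightarrow> 'b \<Rightarrow> real" and G :: "nat \<Rightarrow> 'b set"
  assumes fin: "\<And>i. finite (G i)"
  shows "(\<Sum>g\<in>PiE {..<m} G. (\<Prod>i<m. w i (g i)) *
            ((\<Sum>i<m. (\<Prod>j<i. P j (g j)) * U i (g i)) + (\<Prod>j<m. P j (g j)) * K))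
   = (\<Sum>i<m. (\<Prod>j<i. \<Sum>x\<in>G j. w j x * P j x) * (\<Sum>x\<in>G i. w i x * U i x)
                * (\<Prod>j\<in>{Suc i..<m}. \<Sum>x\<in>G j. w j x))
     + (\<Prod>j<m. \<Sum>x\<in>G j. w j x * P j x) * K"
proof -
  define f where "f i k x = w k x * (if k < i then P k x else if k = i then U k x else 1)" for i k x
  have stop_at: "(\<Prod>k<m. w k (g k)) * ((\<Prod>j<i. P j (g j)) * U i (g i)) = (\<Prod>k<m. f i k (g k))"
    if "i < m" for g i
    using prod_lessThan_split[OF that, of "\<lambda>k. if k < i then P k (g k) else if k = i then U k (g k) else 1"]
    by (simp add: f_def prod.distrib)
  have "(\<Sum>g\<in>PiE {..<m} G. (\<Prod>i<m. w i (g i)) *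
            ((\<Sum>i<m. (\<Prod>j<i. P j (g j)) * U i (g i)) + (\<Prod>j<m. P j (g j)) * K))
     = (\<Sum>g\<in>PiE {..<m} G. (\<Sum>i<m. \<Prod>k<m. f i k (g k)) + (\<Prod>k<m. w k (g k) * P k (g k)) * K)"
    by (intro sum.cong refl) (simp add: distrib_left sum_distrib_left stop_at prod.distrib mult.assoc)
  also have "\<dots> = (\<Sum>i<m. \<Sum>g\<in>PiE {..<m} G. \<Prod>k<m. f i k (g k))
      + (\<Sum>g\<in>PiE {..<m} G. \<Prod>k<m. w k (g k) * P k (g k)) * K"
    by (simp add: sum.distrib sum_distrib_right sum.swap[of _ "PiE {..<m} G"])
  also have "\<dots> = (\<Sum>i<m. \<Prod>k<m. \<Sum>x\<in>G k. f i k x) + (\<Prod>k<m. \<Sum>x\<in>G k. w k x * P k x) * K"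
    by (simp add: prod_sum_PiE fin)
  also have "(\<Sum>i<m. \<Prod>k<m. \<Sum>x\<in>G k. f i k x) = (\<Sum>i<m. (\<Prod>j<i. \<Sum>x\<in>G j. w j x * P j x)
      * (\<Sum>x\<in>G i. w i x * U i x) * (\<Prod>j\<in>{Suc i..<m}. \<Sum>x\<in>G j. w j x))"
    by (intro sum.cong refl) (simp add: prod_lessThan_split f_def)
  finally show ?thesis .
qed

section \<open>The decision phase\<close>

text \<open>The decision phase visits the nodes in post-order and stops at each with probability
  \<open>stop_prob\<close>: \<open>univer_value \<dots> \<Phi>\<close> is the expectation of \<open>\<Phi>\<close> at its output, \<open>univer_nostop\<close> the
  probability that it stops nowhere.\<close>

definition univer_value :: "'a::finite model \<Rightarrow> 'a model \<Rightarrow> 'a top_lists \<Rightarrow> topo \<Rightarrow> 'a labelling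
    \<Rightarrow> real \<Rightarrow> ('a list \<Rightarrow> real) \<Rightarrow> real" where
  "univer_value Mb Ms gtop t lab pt \<Phi> =
     stopping_value (stop_prob Mb Ms gtop t lab pt) (emit_value Mb Ms gtop t lab pt \<Phi>) (postorder t)"

definition univer_nostop :: "'a::finite model \<Rightarrow> 'a model \<Rightarrow> 'a top_lists \<Rightarrow> topo \<Rightarrow> 'a labelling
    \<Rightarrow> real \<Rightarrow> real" where
  "univer_nostop Mb Ms gtop t lab pt = survival (stop_prob Mb Ms gtop t lab pt) (postorder t)"

lemma univer_value_Nd:
  "univer_value Mb Ms gtop (Nd ts) lab pt \<Phi> =
    (\<Sum>i<length ts.
       (\<Prod>j<i. univer_nostop (shift_ctx (lab [j]) Mb) (shift_ctx (lab [j]) Ms) (shift_ctx (lab [j]) gtop)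
                 (ts ! j) (sublab lab j) (child_ptil Mb Ms gtop (Nd ts) lab [] pt j))
       * univer_value (shift_ctx (lab [i]) Mb) (shift_ctx (lab [i]) Ms) (shift_ctx (lab [i]) gtop)
                 (ts ! i) (sublab lab i) (child_ptil Mb Ms gtop (Nd ts) lab [] pt i) (\<lambda>w. \<Phi> (lab [i] # w)))
   + (\<Prod>j<length ts. univer_nostop (shift_ctx (lab [j]) Mb) (shift_ctx (lab [j]) Ms) (shift_ctx (lab [j]) gtop)
                 (ts ! j) (sublab lab j) (child_ptil Mb Ms gtop (Nd ts) lab [] pt j))
     * (stop_prob Mb Ms gtop (Nd ts) lab pt [] * emit_value Mb Ms gtop (Nd ts) lab pt \<Phi> [])"
  unfolding univer_value_def univer_nostop_def postorder_Nd
  by (simp add: stopping_value_append survival_append stopping_value_concat_upt survival_concat_upt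
      stopping_value_map survival_map o_def stop_prob_Cons emit_value_Cons)

lemma univer_nostop_Nd:
  "univer_nostop Mb Ms gtop (Nd ts) lab pt =
   (\<Prod>j<length ts. univer_nostop (shift_ctx (lab [j]) Mb) (shift_ctx (lab [j]) Ms) (shift_ctx (lab [j]) gtop)
                 (ts ! j) (sublab lab j) (child_ptil Mb Ms gtop (Nd ts) lab [] pt j))
     * (1 - stop_prob Mb Ms gtop (Nd ts) lab pt [])"
  unfolding univer_nostop_def postorder_Nd
  by (simp add: survival_append survival_concat_upt survival_map o_def stop_prob_Cons)

lemma univer_value_root_upd [simp]: "univer_value Mb Ms gtop t (lab([] := x)) = univer_value Mb Ms gtop t lab"
  by (simp add: univer_value_def fun_eq_iff)

lemma univer_nostop_root_upd [simp]: "univer_nostop Mb Ms gtop t (lab([] := x)) = univer_nostop Mb Ms gtop t lab"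
  by (simp add: univer_nostop_def fun_eq_iff)

definition inner_nodes :: "topo \<Rightarrow> nat list set" where
  "inner_nodes t = {v \<in> set (postorder t). 0 < nch t v}"

definition node_factor :: "'a::finite model \<Rightarrow> 'a top_lists \<Rightarrow> topo \<Rightarrow> 'a labelling \<Rightarrow> nat list \<Rightarrow> real" where
  "node_factor Ms gtop t lab v =
     (let ctx = tokpath lab v; m = nch t v in
      if map (\<lambda>i. lab (v @ [i])) [0..<m - 1] = gtop ctx (m - 1)
      then res_dist Ms (set (gtop ctx (m - 1))) ctx (lab (v @ [m - 1]))
      else 0)"

lemma pdraft_eq_prod_node_factor: "pdraft Ms gtop t lab = (\<Prod>v\<in>inner_nodes t. node_factor Ms gtop t lab v)"
  by (simp add: pdraft_def node_factor_def inner_nodes_def)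

lemma node_factor_Cons:
  "node_factor Ms gtop (Nd ts) lab (i # p) =
   node_factor (shift_ctx (lab [i]) Ms) (shift_ctx (lab [i]) gtop) (ts ! i) (sublab lab i) p"
  by (simp add: node_factor_def Let_def tokpath_Cons res_dist_Cons shift_ctx_apply sublab_apply)

lemma inner_nodes_Nd:
  "inner_nodes (Nd ts) = (if ts = [] then {} else {[]}) \<union> (\<Union>i<length ts. (#) i ` inner_nodes (ts ! i))"
  by (auto simp: inner_nodes_def set_postorder_Nd)

lemma pdraft_Nd:
  "pdraft Ms gtop (Nd ts) lab = (if ts = [] then 1 else node_factor Ms gtop (Nd ts) lab []) *
     (\<Prod>i<length ts. pdraft (shift_ctx (lab [i]) Ms) (shift_ctx (lab [i]) gtop) (ts ! i) (sublab lab i))"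
proof -
  have fin: "finite (inner_nodes t)" for t by (simp add: inner_nodes_def)
  have "(\<Prod>v\<in>(\<Union>i<length ts. (#) i ` inner_nodes (ts ! i)). node_factor Ms gtop (Nd ts) lab v)
      = (\<Prod>i<length ts. \<Prod>v\<in>(#) i ` inner_nodes (ts ! i). node_factor Ms gtop (Nd ts) lab v)"
    by (rule prod.UNION_disjoint) (auto simp: fin)
  also have "\<dots> = (\<Prod>i<length ts. pdraft (shift_ctx (lab [i]) Ms) (shift_ctx (lab [i]) gtop) (ts ! i) (sublab lab i))"
    by (simp add: prod.reindex pdraft_eq_prod_node_factor node_factor_Cons)
  finally have "(\<Prod>v\<in>(\<Union>i<length ts. (#) i ` inner_nodes (ts ! i)). node_factor Ms gtop (Nd ts) lab v)
      = (\<Prod>i<length ts. pdraft (shift_ctx (lab [i]) Ms) (shift_ctx (lab [i]) gtop) (ts ! i) (sublab lab i))" .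
  moreover have "[] \<notin> (\<Union>i<length ts. (#) i ` inner_nodes (ts ! i))"
    by auto
  ultimately show ?thesis
    by (simp add: pdraft_eq_prod_node_factor inner_nodes_Nd fin)
qed

lemma draft_trees_iff:
  "lab \<in> draft_trees t \<longleftrightarrow> (\<forall>v. v \<notin> set (postorder t) - {[]} \<longrightarrow> lab v = undefined)"
  by (simp add: draft_trees_def PiE_def extensional_def)

lemma finite_draft_trees [simp]: "finite (draft_trees t :: (nat list \<Rightarrow> 'a::finite) set)"
  by (simp add: draft_trees_def finite_PiE)

definition join_lab :: "topo list \<Rightarrow> (nat \<Rightarrow> 'a) \<Rightarrow> (nat \<Rightarrow> nat list \<Rightarrow> 'a) \<Rightarrow> nat list \<Rightarrow> 'a" where
  "join_lab ts a g = (\<lambda>v. case v of [] \<Rightarrow> undefined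
     | i # p \<Rightarrow> if i < length ts then (if p = [] then a i else g i p) else undefined)"

lemma join_lab_single: "a \<in> PiE {..<length ts} (\<lambda>_. UNIV) \<Longrightarrow> join_lab ts a g [i] = a i"
  by (auto simp: join_lab_def PiE_def extensional_def)

lemma sublab_join_lab:
  assumes "g \<in> PiE {..<length ts} (\<lambda>i. draft_trees (ts ! i))" "i < length ts"
  shows "sublab (join_lab ts a g) i = (g i)([] := a i)"
  using assms by (auto simp: join_lab_def sublab_def fun_eq_iff draft_trees_iff)

lemma join_lab_in_draft_trees:
  assumes "g \<in> PiE {..<length ts} (\<lambda>i. draft_trees (ts ! i))"
  shows "join_lab ts a g \<in> draft_trees (Nd ts)"
  unfolding draft_trees_iff
proof (intro allI impI)
  fix v assume v: "v \<notin> set (postorder (Nd ts)) - {[]}"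
  show "join_lab ts a g v = undefined"
  proof (cases v)
    case (Cons i p)
    consider "length ts \<le> i" | "i < length ts" "p = []" | "i < length ts" "p \<noteq> []"
      by linarith
    then show ?thesis
    proof cases
      case 2
      with v Cons show ?thesis by (simp add: set_postorder_Nd)
    next
      case 3
      with v Cons have "p \<notin> set (postorder (ts ! i)) - {[]}"
        by (simp add: set_postorder_Nd)
      moreover have "g i \<in> draft_trees (ts ! i)"
        using assms 3 by auto
      ultimately show ?thesis
        using 3 Cons by (simp add: join_lab_def draft_trees_iff)
    qed (simp add: Cons join_lab_def)
  qed (simp add: join_lab_def)
qed

lemma join_lab_restrict:
  assumes "lab \<in> draft_trees (Nd ts)"
  shows "join_lab ts (restrict (\<lambda>i. lab [i]) {..<length ts})
           (restrict (\<lambda>i p. if p = [] then undefined else lab (i # p)) {..<length ts}) = lab"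
proof
  fix v show "join_lab ts (restrict (\<lambda>i. lab [i]) {..<length ts})
           (restrict (\<lambda>i p. if p = [] then undefined else lab (i # p)) {..<length ts}) v = lab v"
    using assms by (cases v) (auto simp: join_lab_def draft_trees_iff set_postorder_Nd)
qed

lemma draft_trees_root: "lab \<in> draft_trees t \<Longrightarrow> lab [] = undefined"
  by (simp add: draft_trees_iff)

lemma bij_betw_join_lab:
  "bij_betw (\<lambda>(a, g). join_lab ts a g)
     (PiE {..<length ts} (\<lambda>_. UNIV) \<times> PiE {..<length ts} (\<lambda>i. draft_trees (ts ! i)))
     (draft_trees (Nd ts))"
proof (rule bij_betwI[where g = "\<lambda>lab. (restrict (\<lambda>i. lab [i]) {..<length ts},
      restrict (\<lambda>i p. if p = [] then undefined else lab (i # p)) {..<length ts})"])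
  show "(\<lambda>(a, g). join_lab ts a g) \<in>
      PiE {..<length ts} (\<lambda>_. UNIV) \<times> PiE {..<length ts} (\<lambda>i. draft_trees (ts ! i)) \<rightarrow> draft_trees (Nd ts)"
    by (intro Pi_I) (simp add: join_lab_in_draft_trees split_beta mem_Times_iff)
  show "(\<lambda>lab. (restrict (\<lambda>i. lab [i]) {..<length ts},
           restrict (\<lambda>i p. if p = [] then undefined else lab (i # p)) {..<length ts})) \<in> draft_trees (Nd ts)
        \<rightarrow> PiE {..<length ts} (\<lambda>_. UNIV) \<times> PiE {..<length ts} (\<lambda>i. draft_trees (ts ! i))"
    by (auto simp: draft_trees_iff set_postorder_Nd)
  show "(restrict (\<lambda>i. (case x of (a, g) \<Rightarrow> join_lab ts a g) [i]) {..<length ts},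
         restrict (\<lambda>i p. if p = [] then undefined else (case x of (a, g) \<Rightarrow> join_lab ts a g) (i # p))
           {..<length ts}) = x"
    if x_mem: "x \<in> PiE {..<length ts} (\<lambda>_. UNIV) \<times> PiE {..<length ts} (\<lambda>i. draft_trees (ts ! i))" for x
  proof -
    obtain a g where x: "x = (a, g)" "a \<in> PiE {..<length ts} (\<lambda>_. UNIV)"
      "g \<in> PiE {..<length ts} (\<lambda>i. draft_trees (ts ! i))"
      using x_mem by (cases x) simp
    then have "g i [] = undefined" if "i < length ts" for i
      using that by (auto intro: draft_trees_root)
    with x show ?thesis
      by (auto simp: join_lab_def PiE_def extensional_def fun_eq_iff)
  qed
  show "(case (restrict (\<lambda>i. lab [i]) {..<length ts},
           restrict (\<lambda>i p. if p = [] then undefined else lab (i # p)) {..<length ts}) of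
         (a, g) \<Rightarrow> join_lab ts a g) = lab" if "lab \<in> draft_trees (Nd ts)" for lab
    using that by (simp add: join_lab_restrict)
qed

lemma sum_draft_trees_Nd:
  "(\<Sum>lab\<in>draft_trees (Nd ts). F lab) =
   (\<Sum>a\<in>PiE {..<length ts} (\<lambda>_. UNIV). \<Sum>g\<in>PiE {..<length ts} (\<lambda>i. draft_trees (ts ! i)). F (join_lab ts a g))"
  by (simp add: sum.reindex_bij_betw[OF bij_betw_join_lab, symmetric] sum.cartesian_product split_def)

section \<open>The allocation at a node\<close>

lemma pos_part_nonneg: "0 \<le> pos_part x"
  by (simp add: pos_part_def)

definition residual_alloc :: "('a::finite \<Rightarrow> real) \<Rightarrow> ('a \<Rightarrow> real) \<Rightarrow> real \<Rightarrow> 'a \<Rightarrow> 'a \<Rightarrow> real" where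
  "residual_alloc B R pt um =
     (let Z = 1 - pt + (\<Sum>x\<in>UNIV. pos_part (pt * B x - R x));
          pum = min 1 (pt * B um / R um)
      in (\<lambda>u. if u = um then pum else pos_part (pt * B u - R u) * (1 - pum) / Z))"

lemma alloc_eq_residual_alloc:
  "alloc Mb Ms gtop t lab v pt =
   residual_alloc (Mb (tokpath lab v)) (res_dist Ms (set (gtop (tokpath lab v) (nch t v - 1))) (tokpath lab v))
     pt (lab (v @ [nch t v - 1]))"
  by (simp add: alloc_def residual_alloc_def Let_def)

context
  fixes B R :: "'a::finite \<Rightarrow> real" and pt :: real
  assumes B_nonneg: "\<And>x. 0 \<le> B x" and R_nonneg: "\<And>x. 0 \<le> R x"
    and pt_nonneg: "0 \<le> pt" and pt_le_1: "pt \<le> 1"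
begin

lemma residual_alloc_nonneg: "0 \<le> residual_alloc B R pt um u"
proof -
  have "0 \<le> 1 - pt + (\<Sum>x\<in>UNIV. pos_part (pt * B x - R x))"
    using pt_le_1 by (simp add: sum_nonneg pos_part_nonneg)
  then show ?thesis
    using B_nonneg[of um] R_nonneg[of um] pt_nonneg
    by (simp add: residual_alloc_def Let_def pos_part_nonneg)
qed

lemma sum_residual_alloc_le_1: "(\<Sum>u\<in>UNIV. residual_alloc B R pt um u) \<le> 1"
proof -
  define S where "S = (\<Sum>x\<in>UNIV. pos_part (pt * B x - R x))"
  define Z where "Z = 1 - pt + S"
  define pum where "pum = min 1 (pt * B um / R um)"
  have pum: "0 \<le> pum" "pum \<le> 1"
    unfolding pum_def using R_nonneg[of um] B_nonneg[of um] pt_nonneg by simp_all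
  have S: "0 \<le> S" "S \<le> Z"
    unfolding Z_def S_def using pt_le_1 by (simp_all add: sum_nonneg pos_part_nonneg)
  have "(\<Sum>u\<in>UNIV. residual_alloc B R pt um u) =
        residual_alloc B R pt um um + (\<Sum>u\<in>UNIV - {um}. residual_alloc B R pt um u)"
    by (simp add: sum.remove)
  also have "\<dots> = pum + (\<Sum>x\<in>UNIV - {um}. pos_part (pt * B x - R x)) * ((1 - pum) / Z)"
    by (simp add: residual_alloc_def Let_def Z_def S_def pum_def sum_distrib_right sum_divide_distrib)
  also have "\<dots> \<le> pum + S * ((1 - pum) / Z)"
    unfolding S_def using pum S
    by (intro add_left_mono mult_right_mono sum_mono2) (simp_all add: pos_part_nonneg)
  also have "S * ((1 - pum) / Z) \<le> 1 - pum"
  proof (cases "Z = 0")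
    case False
    then have "S / Z \<le> 1"
      using S by (simp add: divide_le_eq_1)
    then have "(1 - pum) * (S / Z) \<le> 1 - pum"
      using pum mult_left_mono[of "S / Z" 1 "1 - pum"] by simp
    then show ?thesis by (simp add: field_simps)
  qed (use pum in simp)
  finally show ?thesis by simp
qed

lemma residual_mass_accepted: "R u * min 1 (pt * B u / R u) = min (R u) (pt * B u)"
  using R_nonneg[of u] B_nonneg[of u] pt_nonneg
  by (cases "R u = 0") (simp_all add: min_def field_simps)

lemma residual_mass_rejected: "R u * (1 - min 1 (pt * B u / R u)) = pos_part (R u - pt * B u)"
  using residual_mass_accepted[of u] by (simp add: algebra_simps pos_part_def min_def max_def)

lemma sum_residual_mass_rejected:
  assumes R_sum: "(\<Sum>x\<in>UNIV. R x) = 1" and B_sum: "(\<Sum>x\<in>UNIV. B x) = 1"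
  shows "(\<Sum>u\<in>UNIV. pos_part (R u - pt * B u)) = 1 - pt + (\<Sum>u\<in>UNIV. pos_part (pt * B u - R u))"
proof -
  have "(\<Sum>u\<in>UNIV. pos_part (R u - pt * B u)) = (\<Sum>u\<in>UNIV. (R u - pt * B u) + pos_part (pt * B u - R u))"
    by (intro sum.cong refl) (simp add: pos_part_def max_def)
  then show ?thesis
    by (simp add: sum.distrib sum_subtractf R_sum B_sum sum_distrib_left[symmetric])
qed

text \<open>Averaged over the residual draw of the last child, the allocation is exactly \<open>pt * B\<close>:
  this is the one-node form of losslessness.\<close>

lemma sum_residual_alloc_marginal:
  assumes R_sum: "(\<Sum>x\<in>UNIV. R x) = 1" and B_sum: "(\<Sum>x\<in>UNIV. B x) = 1"
  shows "(\<Sum>um\<in>UNIV. R um * residual_alloc B R pt um x) = pt * B x"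
proof -
  define Z where "Z = 1 - pt + (\<Sum>x\<in>UNIV. pos_part (pt * B x - R x))"
  have "(\<Sum>um\<in>UNIV. R um * residual_alloc B R pt um x) =
        R x * residual_alloc B R pt x x + (\<Sum>um\<in>UNIV - {x}. R um * residual_alloc B R pt um x)"
    by (simp add: sum.remove)
  also have "\<dots> = min (R x) (pt * B x) +
      (\<Sum>um\<in>UNIV - {x}. pos_part (R um - pt * B um)) * (pos_part (pt * B x - R x) / Z)"
    unfolding sum_distrib_right
    by (auto simp: residual_alloc_def Let_def Z_def residual_mass_accepted residual_mass_rejected[symmetric]
        intro!: sum.cong)
  also have "(\<Sum>um\<in>UNIV - {x}. pos_part (R um - pt * B um)) = Z - pos_part (R x - pt * B x)"
    using sum_residual_mass_rejected[OF R_sum B_sum] sum.remove[of UNIV x "\<lambda>u. pos_part (R u - pt * B u)"]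
    by (simp add: Z_def)
  finally have eq: "(\<Sum>um\<in>UNIV. R um * residual_alloc B R pt um x) =
      min (R x) (pt * B x) + (Z - pos_part (R x - pt * B x)) * (pos_part (pt * B x - R x) / Z)" .
  show ?thesis
  proof (cases "pt * B x \<le> R x")
    case True
    then show ?thesis using eq by (simp add: pos_part_def)
  next
    case False
    have "pos_part (pt * B x - R x) \<le> (\<Sum>y\<in>UNIV. pos_part (pt * B y - R y))"
      by (rule member_le_sum) (simp_all add: pos_part_nonneg)
    then have "Z > 0" using False pt_le_1 unfolding Z_def by (simp add: pos_part_def)
    then show ?thesis using eq False by (simp add: pos_part_def)
  qed
qed

end

text \<open>The children \<open>c 0, \<dots>, c (m - 1)\<close> of a node are accepted one after the other with the
  conditional probabilities \<open>seq_accept\<close>; when all are rejected, the node stops with probability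
  \<open>seq_residual_accept\<close> and emits by \<open>seq_residual_emit\<close>.  Together this realises \<open>p\<close>.\<close>

definition seq_prefix_mass :: "('a \<Rightarrow> real) \<Rightarrow> (nat \<Rightarrow> 'a) \<Rightarrow> nat \<Rightarrow> real" where
  "seq_prefix_mass p c j = (\<Sum>i<j. p (c i))"

definition seq_accept :: "('a \<Rightarrow> real) \<Rightarrow> (nat \<Rightarrow> 'a) \<Rightarrow> nat \<Rightarrow> real" where
  "seq_accept p c j = p (c j) / (1 - seq_prefix_mass p c j)"

definition seq_residual_accept :: "('a::finite \<Rightarrow> real) \<Rightarrow> (nat \<Rightarrow> 'a) \<Rightarrow> nat \<Rightarrow> real" where
  "seq_residual_accept p c m = 1 - (1 - (\<Sum>u\<in>UNIV. p u)) / (1 - seq_prefix_mass p c m)"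

definition seq_residual_emit :: "('a::finite \<Rightarrow> real) \<Rightarrow> (nat \<Rightarrow> 'a) \<Rightarrow> nat \<Rightarrow> 'a \<Rightarrow> real" where
  "seq_residual_emit p c m y =
     (if y \<in> c ` {..<m} then 0 else p y / (\<Sum>u\<in>UNIV - c ` {..<m}. p u))"

locale sequential_acceptance =
  fixes p :: "'a::finite \<Rightarrow> real" and c :: "nat \<Rightarrow> 'a" and m :: nat
  assumes p_nonneg: "\<And>x. 0 \<le> p x" and sum_p_le_1: "(\<Sum>x\<in>UNIV. p x) \<le> 1"
    and inj_c: "inj_on c {..<m}"
begin

abbreviation "prefix_mass \<equiv> seq_prefix_mass p c"
abbreviation "accept \<equiv> seq_accept p c"
abbreviation "residual_accept \<equiv> seq_residual_accept p c m"
abbreviation "residual_emit \<equiv> seq_residual_emit p c m"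

lemma prefix_mass_m: "prefix_mass m = (\<Sum>y\<in>c ` {..<m}. p y)"
  using inj_c by (simp add: seq_prefix_mass_def sum.reindex)

lemma sum_p_split: "(\<Sum>u\<in>UNIV. p u) = prefix_mass m + (\<Sum>u\<in>UNIV - c ` {..<m}. p u)"
  by (simp add: prefix_mass_m sum.subset_diff[of "c ` {..<m}" UNIV])

lemma prefix_mass_Suc: "prefix_mass (Suc j) = prefix_mass j + p (c j)"
  by (simp add: seq_prefix_mass_def)

lemma residual_mass_nonneg: "0 \<le> (\<Sum>u\<in>UNIV - c ` {..<m}. p u)"
  by (simp add: sum_nonneg p_nonneg)

lemma prefix_mass_le: "j < m \<Longrightarrow> prefix_mass j + p (c j) \<le> 1"
proof -
  assume "j < m"
  have "prefix_mass j + p (c j) = (\<Sum>i<Suc j. p (c i))"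
    by (simp add: seq_prefix_mass_def)
  also have "\<dots> \<le> prefix_mass m"
    unfolding seq_prefix_mass_def using \<open>j < m\<close> by (intro sum_mono2) (auto simp: p_nonneg)
  also have "\<dots> \<le> 1"
    using sum_p_split sum_p_le_1 residual_mass_nonneg by linarith
  finally show ?thesis .
qed

lemma accept_bounds: "j < m \<Longrightarrow> 0 \<le> accept j \<and> accept j \<le> 1"
  using prefix_mass_le[of j] p_nonneg[of "c j"]
  by (cases "prefix_mass j = 1") (auto simp: seq_accept_def divide_le_eq_1)

lemma prod_one_minus_accept: "i \<le> m \<Longrightarrow> (\<Prod>j<i. 1 - accept j) = 1 - prefix_mass i"
proof (induction i)
  case (Suc i)
  then have IH: "(\<Prod>j<i. 1 - accept j) = 1 - prefix_mass i"
    by simp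
  have "prefix_mass i + p (c i) \<le> 1"
    using Suc.prems by (intro prefix_mass_le) simp
  then have "(1 - prefix_mass i) * (1 - p (c i) / (1 - prefix_mass i)) = 1 - prefix_mass (Suc i)"
    using p_nonneg[of "c i"] by (cases "prefix_mass i = 1") (simp_all add: prefix_mass_Suc field_simps)
  then show ?case
    by (simp add: IH seq_accept_def[of p c i])
qed (simp add: seq_prefix_mass_def)

lemma prod_one_minus_accept_mult_accept: "i < m \<Longrightarrow> (\<Prod>j<i. 1 - accept j) * accept i = p (c i)"
proof -
  assume "i < m"
  then have "(\<Prod>j<i. 1 - accept j) = 1 - prefix_mass i"
    by (simp add: prod_one_minus_accept)
  with prefix_mass_le[OF \<open>i < m\<close>] p_nonneg[of "c i"] show ?thesis
    by (cases "prefix_mass i = 1") (simp_all add: seq_accept_def[of p c i])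
qed

lemma residual_accept_bounds: "0 \<le> residual_accept" "residual_accept \<le> 1"
  using sum_p_split sum_p_le_1 residual_mass_nonneg
  by (auto simp: seq_residual_accept_def divide_le_eq_1 not_le)

lemma prod_one_minus_accept_mult_residual:
  "(\<Prod>j<m. 1 - accept j) * residual_accept = (\<Sum>u\<in>UNIV - c ` {..<m}. p u)"
  using sum_p_split sum_p_le_1 residual_mass_nonneg
  by (cases "prefix_mass m = 1") (simp_all add: prod_one_minus_accept seq_residual_accept_def field_simps)

lemma sequential_value:
  "(\<Sum>i<m. (\<Prod>j<i. 1 - accept j) * (accept i * \<phi> (c i)))
     + (\<Prod>j<m. 1 - accept j) * (residual_accept * (\<Sum>y\<in>UNIV. residual_emit y * \<phi> y))
   = (\<Sum>y\<in>UNIV. p y * \<phi> y)"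
proof -
  define N where "N = (\<Sum>u\<in>UNIV - c ` {..<m}. p u)"
  have "(\<Sum>i<m. (\<Prod>j<i. 1 - accept j) * (accept i * \<phi> (c i))) = (\<Sum>i<m. p (c i) * \<phi> (c i))"
    by (intro sum.cong refl) (simp add: prod_one_minus_accept_mult_accept mult.assoc[symmetric])
  also have "\<dots> = (\<Sum>y\<in>c ` {..<m}. p y * \<phi> y)"
    using inj_c by (simp add: sum.reindex)
  finally have accepted: "(\<Sum>i<m. (\<Prod>j<i. 1 - accept j) * (accept i * \<phi> (c i))) =
      (\<Sum>y\<in>c ` {..<m}. p y * \<phi> y)" .
  have "N * (\<Sum>y\<in>UNIV. residual_emit y * \<phi> y) = (\<Sum>y\<in>UNIV - c ` {..<m}. p y * \<phi> y)"
  proof (cases "N = 0")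
    case True
    then have "\<forall>y\<in>UNIV - c ` {..<m}. p y = 0"
      unfolding N_def by (subst (asm) sum_nonneg_eq_0_iff) (simp_all add: p_nonneg)
    with True show ?thesis by simp
  next
    case False
    have "(\<Sum>y\<in>UNIV. residual_emit y * \<phi> y) = (\<Sum>y\<in>UNIV - c ` {..<m}. p y * \<phi> y / N)"
      by (subst sum.mono_neutral_right[of UNIV "UNIV - c ` {..<m}"])
        (auto simp: seq_residual_emit_def N_def)
    with False show ?thesis by (simp add: sum_divide_distrib[symmetric])
  qed
  then have "(\<Prod>j<m. 1 - accept j) * (residual_accept * (\<Sum>y\<in>UNIV. residual_emit y * \<phi> y)) =
      (\<Sum>y\<in>UNIV - c ` {..<m}. p y * \<phi> y)"
    by (simp add: prod_one_minus_accept_mult_residual mult.assoc[symmetric] N_def)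
  with accepted show ?thesis
    by (simp add: sum.subset_diff[of "c ` {..<m}" UNIV])
qed

lemma sequential_nostop: "(\<Prod>j<m. 1 - accept j) * (1 - residual_accept) = 1 - (\<Sum>y\<in>UNIV. p y)"
  using prod_one_minus_accept_mult_residual prod_one_minus_accept[of m] sum_p_split
  by (simp add: right_diff_distrib)

end

section \<open>The induction on the topology\<close>

definition distinct_tops :: "'a::finite top_lists \<Rightarrow> bool" where
  "distinct_tops gtop \<longleftrightarrow>
     (\<forall>ctx k. k < card (UNIV :: 'a set) \<longrightarrow> length (gtop ctx k) = k \<and> distinct (gtop ctx k))"

definition well_posed :: "'a::finite model \<Rightarrow> 'a model \<Rightarrow> 'a top_lists \<Rightarrow> topo \<Rightarrow> bool" where
  "well_posed Mb Ms gtop t \<longleftrightarrow>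
     (\<forall>ctx x. 0 \<le> Mb ctx x) \<and> (\<forall>ctx. (\<Sum>x\<in>UNIV. Mb ctx x) = 1) \<and>
     (\<forall>ctx x. 0 \<le> Ms ctx x) \<and> distinct_tops gtop \<and>
     (\<forall>v\<in>set (postorder t). nch t v \<le> card (UNIV :: 'a set)) \<and>
     (\<forall>ctx. \<forall>v\<in>set (postorder t). 0 < nch t v \<longrightarrow>
        0 < (\<Sum>y\<in>UNIV - set (gtop ctx (nch t v - 1)). Ms ctx y))"

definition harmonic_upto :: "'a::finite model \<Rightarrow> nat \<Rightarrow> ('a list \<Rightarrow> real) \<Rightarrow> bool" where
  "harmonic_upto Mb n \<Phi> \<longleftrightarrow> (\<forall>w. length w \<le> n \<longrightarrow> \<Phi> w = (\<Sum>y\<in>UNIV. Mb w y * \<Phi> (w @ [y])))"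

text \<open>Outputs have different lengths.  For \<open>\<Phi>\<close> harmonic for \<open>M\<^sub>b\<close> up to the depth, \<open>\<Phi> []\<close> is the
  \<open>M\<^sub>b\<close>-expectation of \<open>\<Phi>\<close> at each of these lengths, so the last clause says that the output,
  continued by \<open>M\<^sub>b\<close>, is distributed as \<open>pt\<close> times \<open>M\<^sub>b\<close>.\<close>

definition lossless_invariant :: "'a::finite model \<Rightarrow> 'a model \<Rightarrow> 'a top_lists \<Rightarrow> topo \<Rightarrow> real \<Rightarrow> bool" where
  "lossless_invariant Mb Ms gtop t pt \<longleftrightarrow>
     (\<Sum>lab\<in>draft_trees t. pdraft Ms gtop t lab) = 1 \<and>
     (\<Sum>lab\<in>draft_trees t. pdraft Ms gtop t lab * univer_nostop Mb Ms gtop t lab pt) = 1 - pt \<and>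
     (\<forall>\<Phi>. harmonic_upto Mb (height t) \<Phi> \<longrightarrow>
        (\<Sum>lab\<in>draft_trees t. pdraft Ms gtop t lab * univer_value Mb Ms gtop t lab pt \<Phi>) = pt * \<Phi> [])"

lemma well_posedD:
  fixes Mb :: "'a::finite model"
  assumes "well_posed Mb Ms gtop t"
  shows "0 \<le> Mb ctx x" "(\<Sum>x\<in>UNIV. Mb ctx x) = 1" "0 \<le> Ms ctx x" "distinct_tops gtop"
    and "v \<in> set (postorder t) \<Longrightarrow> nch t v \<le> card (UNIV :: 'a set)"
    and "v \<in> set (postorder t) \<Longrightarrow> 0 < nch t v \<Longrightarrow>
      0 < (\<Sum>y\<in>UNIV - set (gtop ctx (nch t v - 1)). Ms ctx y)"
  using assms unfolding well_posed_def by auto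

lemma well_posed_child:
  assumes "well_posed Mb Ms gtop (Nd ts)" "i < length ts"
  shows "well_posed (shift_ctx a Mb) (shift_ctx a Ms) (shift_ctx a gtop) (ts ! i)"
proof -
  have child: "i # v \<in> set (postorder (Nd ts))" if "v \<in> set (postorder (ts ! i))" for v
    using assms(2) that by (auto simp: set_postorder_Nd)
  have "0 < (\<Sum>y\<in>UNIV - set (gtop (a # ctx) (nch (ts ! i) v - 1)). Ms (a # ctx) y)"
    if "v \<in> set (postorder (ts ! i))" "0 < nch (ts ! i) v" for ctx v
    using assms(1) child[OF that(1)] that(2) unfolding well_posed_def by (metis nch_Nd_Cons)
  moreover have "nch (ts ! i) v \<le> card (UNIV :: 'a set)" if "v \<in> set (postorder (ts ! i))" for v
    using assms(1) child[OF that] unfolding well_posed_def by (metis nch_Nd_Cons)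
  ultimately show ?thesis
    using assms(1) by (simp add: well_posed_def distinct_tops_def shift_ctx_apply)
qed

lemma harmonic_upto_child:
  assumes "harmonic_upto Mb (height (Nd ts)) \<Phi>" "i < length ts"
  shows "harmonic_upto (shift_ctx a Mb) (height (ts ! i)) (\<lambda>w. \<Phi> (a # w))"
  using assms height_nth[OF assms(2)] unfolding harmonic_upto_def
  by (simp add: shift_ctx_apply)

lemma harmonic_upto_Nil: "harmonic_upto Mb n \<Phi> \<Longrightarrow> \<Phi> [] = (\<Sum>y\<in>UNIV. Mb [] y * \<Phi> [y])"
  by (simp add: harmonic_upto_def)

lemma lossless_invariant_leaf:
  assumes "0 \<le> pt" "pt \<le> 1"
  shows "lossless_invariant Mb Ms gtop (Nd []) pt"
proof -
  have "set (postorder (Nd [])) = {[]}"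
    by (simp add: postorder_Nd)
  then have trees: "draft_trees (Nd []) = {\<lambda>_. undefined}"
    by (simp add: draft_trees_def)
  have stop: "stop_prob Mb Ms gtop (Nd []) lab pt [] = pt" for lab
    using assms by (simp add: stop_prob_def unif_lt_def)
  show ?thesis
    unfolding lossless_invariant_def trees
    by (simp add: pdraft_Nd univer_nostop_Nd univer_value_Nd stop emit_value_def emit_init_def
        harmonic_upto_def)
qed

locale lossless_step =
  fixes Mb Ms :: "'a::finite model" and gtop :: "'a top_lists"
    and ts :: "topo list" and pt :: real
  assumes ts_ne: "ts \<noteq> []" and well_posed: "well_posed Mb Ms gtop (Nd ts)"
    and pt_nonneg: "0 \<le> pt" and pt_le_1: "pt \<le> 1"
    and children_lossless: "\<And>i a q. i < length ts \<Longrightarrow> 0 \<le> q \<Longrightarrow> q \<le> 1 \<Longrightarrow>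
        lossless_invariant (shift_ctx a Mb) (shift_ctx a Ms) (shift_ctx a gtop) (ts ! i) q"
begin

definition top_tokens :: "'a list" where
  "top_tokens = gtop [] (length ts - 1)"

definition root_res :: "'a \<Rightarrow> real" where
  "root_res = res_dist Ms (set top_tokens) []"

text \<open>The tokens of the root's children when the residual draw gives \<open>u\<close>; \<open>undefined\<close>
  outside the children keeps it an element of the \<open>PiE\<close> space of \<open>sum_draft_trees_Nd\<close>.\<close>

definition child_tokens :: "'a \<Rightarrow> nat \<Rightarrow> 'a" where
  "child_tokens u i =
     (if i < length ts then (if i < length ts - 1 then top_tokens ! i else u) else undefined)"

definition root_alloc :: "'a \<Rightarrow> 'a \<Rightarrow> real" where
  "root_alloc u = residual_alloc (Mb []) root_res pt u"

abbreviation child_accept :: "'a \<Rightarrow> nat \<Rightarrow> real" where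
  "child_accept u \<equiv> seq_accept (root_alloc u) (child_tokens u)"

definition root_weight :: "(nat \<Rightarrow> 'a) \<Rightarrow> real" where
  "root_weight a = (if map a [0..<length ts - 1] = top_tokens then root_res (a (length ts - 1)) else 0)"

lemmas Mb_nonneg = well_posedD(1)[OF well_posed]
  and Mb_sum = well_posedD(2)[OF well_posed]

lemma root_fanout: "length ts \<le> card (UNIV :: 'a set)"
  using well_posedD(5)[OF well_posed Nil_in_postorder] by simp

lemma root_residual_pos: "0 < (\<Sum>y\<in>UNIV - set top_tokens. Ms [] y)"
  using well_posedD(6)[OF well_posed Nil_in_postorder, of "[]"] ts_ne by (simp add: top_tokens_def)

lemma top_tokens: "length top_tokens = length ts - 1" "distinct top_tokens"
proof -
  have "length ts - 1 < length ts"
    using ts_ne by simp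
  with root_fanout have "length ts - 1 < card (UNIV :: 'a set)"
    by linarith
  then show "length top_tokens = length ts - 1" "distinct top_tokens"
    using well_posedD(4)[OF well_posed] by (simp_all add: distinct_tops_def top_tokens_def)
qed

lemma root_res_nonneg: "0 \<le> root_res x"
  and sum_root_res: "(\<Sum>x\<in>UNIV. root_res x) = 1"
  and root_res_top_tokens: "root_res u \<noteq> 0 \<Longrightarrow> u \<notin> set top_tokens"
proof -
  show "0 \<le> root_res x"
    using well_posedD(3)[OF well_posed] root_residual_pos by (simp add: root_res_def res_dist_def)
  have "(\<Sum>x\<in>UNIV. root_res x) = (\<Sum>x\<in>UNIV - set top_tokens. Ms [] x / (\<Sum>y\<in>UNIV - set top_tokens. Ms [] y))"
    by (subst sum.mono_neutral_right[of UNIV "UNIV - set top_tokens"]) (auto simp: root_res_def res_dist_def)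
  with root_residual_pos show "(\<Sum>x\<in>UNIV. root_res x) = 1"
    by (simp add: sum_divide_distrib[symmetric])
  show "root_res u \<noteq> 0 \<Longrightarrow> u \<notin> set top_tokens"
    by (auto simp: root_res_def res_dist_def)
qed

lemma child_tokens_PiE: "child_tokens u \<in> PiE {..<length ts} (\<lambda>_. UNIV)"
  by (auto simp: child_tokens_def PiE_def extensional_def)

lemma child_tokens_last: "child_tokens u (length ts - 1) = u"
  using ts_ne by (simp add: child_tokens_def)

lemma inj_on_child_tokens:
  assumes "root_res u \<noteq> 0"
  shows "inj_on (child_tokens u) {..<length ts}"
proof -
  have "u \<notin> set top_tokens"
    using root_res_top_tokens[OF assms] .
  then show ?thesis
    using top_tokens by (auto simp: inj_on_def child_tokens_def nth_eq_iff_index_eq)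
qed

lemma sequential_acceptance_root:
  assumes "root_res u \<noteq> 0"
  shows "sequential_acceptance (root_alloc u) (child_tokens u) (length ts)"
proof
  show "0 \<le> root_alloc u x" for x
    unfolding root_alloc_def by (rule residual_alloc_nonneg[OF Mb_nonneg root_res_nonneg pt_nonneg pt_le_1])
  show "(\<Sum>x\<in>UNIV. root_alloc u x) \<le> 1"
    unfolding root_alloc_def by (rule sum_residual_alloc_le_1[OF Mb_nonneg root_res_nonneg pt_nonneg pt_le_1])
qed (rule inj_on_child_tokens[OF assms])

lemma sum_root_alloc:
  "(\<Sum>u\<in>UNIV. root_res u * (\<Sum>y\<in>UNIV. root_alloc u y * \<phi> y)) = pt * (\<Sum>y\<in>UNIV. Mb [] y * \<phi> y)"
proof -
  have "(\<Sum>u\<in>UNIV. root_res u * (\<Sum>y\<in>UNIV. root_alloc u y * \<phi> y)) =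
        (\<Sum>u\<in>UNIV. \<Sum>y\<in>UNIV. root_res u * root_alloc u y * \<phi> y)"
    by (simp add: sum_distrib_left mult.assoc)
  also have "\<dots> = (\<Sum>y\<in>UNIV. (\<Sum>u\<in>UNIV. root_res u * root_alloc u y) * \<phi> y)"
    by (subst sum.swap) (simp add: sum_distrib_right)
  also have "\<dots> = (\<Sum>y\<in>UNIV. pt * Mb [] y * \<phi> y)"
    using sum_residual_alloc_marginal[OF Mb_nonneg root_res_nonneg pt_nonneg pt_le_1 sum_root_res Mb_sum]
    by (simp add: root_alloc_def)
  finally show ?thesis
    by (simp add: sum_distrib_left mult.assoc)
qed

lemma sum_root_res_cong:
  "(\<And>u. root_res u \<noteq> 0 \<Longrightarrow> f u = g u) \<Longrightarrow>
   (\<Sum>u\<in>UNIV. root_res u * f u) = (\<Sum>u\<in>UNIV. root_res u * g u)"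
  by (intro sum.cong refl) (metis mult_zero_left)

lemma root_weight_child_tokens: "root_weight (child_tokens u) = root_res u"
proof -
  have "map (child_tokens u) [0..<length ts - 1] = top_tokens"
    by (rule nth_equalityI) (auto simp: top_tokens child_tokens_def)
  then show ?thesis
    by (simp add: root_weight_def child_tokens_last[simplified])
qed

lemma root_weight_eq_0:
  assumes "a \<in> PiE {..<length ts} (\<lambda>_. UNIV)" "a \<notin> range child_tokens"
  shows "root_weight a = 0"
proof (rule ccontr)
  assume "root_weight a \<noteq> 0"
  then have tops: "map a [0..<length ts - 1] = top_tokens"
    by (auto simp: root_weight_def split: if_splits)
  have "a = child_tokens (a (length ts - 1))"
  proof
    fix i
    show "a i = child_tokens (a (length ts - 1)) i"
    proof (cases "i < length ts - 1")
      case True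
      then show ?thesis
        using arg_cong[OF tops, of "\<lambda>xs. xs ! i"] by (auto simp: child_tokens_def)
    next
      case False
      show ?thesis
      proof (cases "i < length ts")
        case True
        with False have "i = length ts - 1"
          by linarith
        then show ?thesis
          by (simp add: child_tokens_last[simplified])
      next
        case False
        then show ?thesis
          using assms(1) by (simp add: child_tokens_def PiE_def extensional_def)
      qed
    qed
  qed
  with assms(2) show False
    by blast
qed

lemma sum_root_weight:
  "(\<Sum>a\<in>PiE {..<length ts} (\<lambda>_. UNIV). root_weight a * H a) = (\<Sum>u\<in>UNIV. root_res u * H (child_tokens u))"
proof -
  have "inj child_tokens"
    by (metis injI child_tokens_last)
  have "(\<Sum>a\<in>PiE {..<length ts} (\<lambda>_. UNIV). root_weight a * H a) = (\<Sum>a\<in>range child_tokens. root_weight a * H a)"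
    using child_tokens_PiE root_weight_eq_0
    by (intro sum.mono_neutral_right) (auto simp: finite_PiE simp del: PiE_iff)
  also have "\<dots> = (\<Sum>u\<in>UNIV. root_res u * H (child_tokens u))"
    using \<open>inj child_tokens\<close> by (simp add: sum.reindex root_weight_child_tokens)
  finally show ?thesis .
qed

definition child_pdraft :: "'a \<Rightarrow> nat \<Rightarrow> (nat list \<Rightarrow> 'a) \<Rightarrow> real" where
  "child_pdraft u i = pdraft (shift_ctx (child_tokens u i) Ms) (shift_ctx (child_tokens u i) gtop) (ts ! i)"

definition child_nostop :: "'a \<Rightarrow> nat \<Rightarrow> (nat list \<Rightarrow> 'a) \<Rightarrow> real" where
  "child_nostop u i x = univer_nostop (shift_ctx (child_tokens u i) Mb) (shift_ctx (child_tokens u i) Ms)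
     (shift_ctx (child_tokens u i) gtop) (ts ! i) x (child_accept u i)"

definition child_value :: "'a \<Rightarrow> ('a list \<Rightarrow> real) \<Rightarrow> nat \<Rightarrow> (nat list \<Rightarrow> 'a) \<Rightarrow> real" where
  "child_value u \<Phi> i x = univer_value (shift_ctx (child_tokens u i) Mb) (shift_ctx (child_tokens u i) Ms)
     (shift_ctx (child_tokens u i) gtop) (ts ! i) x (child_accept u i) (\<lambda>w. \<Phi> (child_tokens u i # w))"

lemma join_child_tokens_single: "join_lab ts (child_tokens u) g [i] = child_tokens u i"
  by (rule join_lab_single[OF child_tokens_PiE])

lemma pdraft_join_lab:
  assumes "a \<in> PiE {..<length ts} (\<lambda>_. UNIV)" "g \<in> PiE {..<length ts} (\<lambda>i. draft_trees (ts ! i))"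
  shows "pdraft Ms gtop (Nd ts) (join_lab ts a g) =
    root_weight a * (\<Prod>i<length ts. pdraft (shift_ctx (a i) Ms) (shift_ctx (a i) gtop) (ts ! i) (g i))"
proof -
  have "(\<Prod>i<length ts. pdraft (shift_ctx (a i) Ms) (shift_ctx (a i) gtop) (ts ! i) (sublab (join_lab ts a g) i))
      = (\<Prod>i<length ts. pdraft (shift_ctx (a i) Ms) (shift_ctx (a i) gtop) (ts ! i) (g i))"
    by (intro prod.cong refl) (simp add: sublab_join_lab[OF assms(2)])
  then show ?thesis
    using assms(1) by (simp add: pdraft_Nd ts_ne node_factor_def Let_def root_weight_def top_tokens_def
        root_res_def join_lab_single)
qed

lemma sum_draft_trees_root:
  "(\<Sum>lab\<in>draft_trees (Nd ts). pdraft Ms gtop (Nd ts) lab * F lab) =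
   (\<Sum>u\<in>UNIV. root_res u * (\<Sum>g\<in>PiE {..<length ts} (\<lambda>i. draft_trees (ts ! i)).
      (\<Prod>i<length ts. child_pdraft u i (g i)) * F (join_lab ts (child_tokens u) g)))"
proof -
  have "(\<Sum>lab\<in>draft_trees (Nd ts). pdraft Ms gtop (Nd ts) lab * F lab) =
      (\<Sum>a\<in>PiE {..<length ts} (\<lambda>_. UNIV). root_weight a * (\<Sum>g\<in>PiE {..<length ts} (\<lambda>i. draft_trees (ts ! i)).
        (\<Prod>i<length ts. pdraft (shift_ctx (a i) Ms) (shift_ctx (a i) gtop) (ts ! i) (g i)) * F (join_lab ts a g)))"
    unfolding sum_draft_trees_Nd sum_distrib_left
    by (intro sum.cong refl) (simp add: pdraft_join_lab mult.assoc)
  then show ?thesis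
    by (simp add: sum_root_weight child_pdraft_def)
qed

lemma alloc_root:
  "(\<And>i. lab [i] = child_tokens u i) \<Longrightarrow> alloc Mb Ms gtop (Nd ts) lab [] pt = root_alloc u"
  by (simp add: alloc_eq_residual_alloc root_alloc_def root_res_def top_tokens_def child_tokens_last[simplified])

lemma child_ptil_root:
  "(\<And>i. lab [i] = child_tokens u i) \<Longrightarrow> child_ptil Mb Ms gtop (Nd ts) lab [] pt = child_accept u"
  by (simp add: child_ptil_def Let_def alloc_root seq_accept_def
      seq_prefix_mass_def fun_eq_iff)

lemma stop_prob_root:
  assumes "\<And>i. lab [i] = child_tokens u i" "root_res u \<noteq> 0"
  shows "stop_prob Mb Ms gtop (Nd ts) lab pt [] =
    seq_residual_accept (root_alloc u) (child_tokens u) (length ts)"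
  using sequential_acceptance.residual_accept_bounds[OF sequential_acceptance_root[OF assms(2)]] assms(1)
  by (simp add: stop_prob_def pres_init_def Let_def alloc_root ts_ne unif_lt_def
      seq_residual_accept_def seq_prefix_mass_def)

lemma emit_value_root:
  assumes "\<And>i. lab [i] = child_tokens u i"
  shows "emit_value Mb Ms gtop (Nd ts) lab pt \<Phi> [] =
    (\<Sum>y\<in>UNIV. seq_residual_emit (root_alloc u) (child_tokens u) (length ts) y * \<Phi> [y])"
  using assms by (simp add: emit_value_def emit_init_def Let_def ts_ne alloc_root
      seq_residual_emit_def cong: if_cong)

lemma child_quantities_join:
  fixes u :: 'a
  assumes "g \<in> PiE {..<length ts} (\<lambda>i. draft_trees (ts ! i))" "j < length ts"
  defines "lab \<equiv> join_lab ts (child_tokens u) g"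
  shows "univer_nostop (shift_ctx (lab [j]) Mb) (shift_ctx (lab [j]) Ms) (shift_ctx (lab [j]) gtop)
           (ts ! j) (sublab lab j) (child_ptil Mb Ms gtop (Nd ts) lab [] pt j) = child_nostop u j (g j)"
    and "univer_value (shift_ctx (lab [j]) Mb) (shift_ctx (lab [j]) Ms) (shift_ctx (lab [j]) gtop)
           (ts ! j) (sublab lab j) (child_ptil Mb Ms gtop (Nd ts) lab [] pt j) (\<lambda>w. \<Phi> (lab [j] # w))
         = child_value u \<Phi> j (g j)"
  using assms by (simp_all add: join_child_tokens_single sublab_join_lab child_ptil_root
      child_nostop_def child_value_def)

lemma univer_nostop_join:
  assumes "g \<in> PiE {..<length ts} (\<lambda>i. draft_trees (ts ! i))" "root_res u \<noteq> 0"
  shows "univer_nostop Mb Ms gtop (Nd ts) (join_lab ts (child_tokens u) g) pt =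
    (\<Prod>j<length ts. child_nostop u j (g j)) * (1 - seq_residual_accept (root_alloc u) (child_tokens u) (length ts))"
  unfolding univer_nostop_Nd
  by (intro arg_cong2[where f = "(*)"] prod.cong refl)
    (simp_all add: child_quantities_join[OF assms(1)] stop_prob_root[OF join_child_tokens_single assms(2)])

lemma univer_value_join:
  assumes "g \<in> PiE {..<length ts} (\<lambda>i. draft_trees (ts ! i))" "root_res u \<noteq> 0"
  shows "univer_value Mb Ms gtop (Nd ts) (join_lab ts (child_tokens u) g) pt \<Phi> =
    (\<Sum>i<length ts. (\<Prod>j<i. child_nostop u j (g j)) * child_value u \<Phi> i (g i))
    + (\<Prod>j<length ts. child_nostop u j (g j))
      * (seq_residual_accept (root_alloc u) (child_tokens u) (length ts)
         * (\<Sum>y\<in>UNIV. seq_residual_emit (root_alloc u) (child_tokens u) (length ts) y * \<Phi> [y]))"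
  unfolding univer_value_Nd
  by (intro arg_cong2[where f = "(+)"] arg_cong2[where f = "(*)"] sum.cong prod.cong refl)
    (simp_all add: child_quantities_join[OF assms(1)] stop_prob_root[OF join_child_tokens_single assms(2)]
      emit_value_root[OF join_child_tokens_single])

lemma sum_child_pdraft: "i < length ts \<Longrightarrow> (\<Sum>x\<in>draft_trees (ts ! i). child_pdraft u i x) = 1"
  using children_lossless[of i 0] by (simp add: lossless_invariant_def child_pdraft_def)

lemma sum_child_nostop:
  assumes "root_res u \<noteq> 0" "i < length ts"
  shows "(\<Sum>x\<in>draft_trees (ts ! i). child_pdraft u i x * child_nostop u i x) = 1 - child_accept u i"
  using children_lossless[OF assms(2)]
    sequential_acceptance.accept_bounds[OF sequential_acceptance_root[OF assms(1)] assms(2)]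
  by (simp add: lossless_invariant_def child_pdraft_def child_nostop_def)

lemma sum_child_value:
  assumes "root_res u \<noteq> 0" "i < length ts" "harmonic_upto Mb (height (Nd ts)) \<Phi>"
  shows "(\<Sum>x\<in>draft_trees (ts ! i). child_pdraft u i x * child_value u \<Phi> i x) =
    child_accept u i * \<Phi> [child_tokens u i]"
  using children_lossless[OF assms(2)]
    sequential_acceptance.accept_bounds[OF sequential_acceptance_root[OF assms(1)] assms(2)]
    harmonic_upto_child[OF assms(3,2)]
  by (simp add: lossless_invariant_def child_pdraft_def child_value_def)

lemma sum_PiE_children:
  fixes f :: "nat \<Rightarrow> (nat list \<Rightarrow> 'a) \<Rightarrow> real"
  shows "(\<Sum>g\<in>PiE {..<length ts} (\<lambda>i. draft_trees (ts ! i)). \<Prod>i<length ts. f i (g i)) =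
   (\<Prod>i<length ts. \<Sum>x\<in>draft_trees (ts ! i). f i x)"
  by (simp add: prod_sum_PiE)

lemma sum_pdraft_Nd: "(\<Sum>lab\<in>draft_trees (Nd ts). pdraft Ms gtop (Nd ts) lab) = 1"
  using sum_draft_trees_root[of "\<lambda>_. 1"] sum_PiE_children[of "child_pdraft _"]
  by (simp add: sum_child_pdraft sum_root_res)

lemma sum_children_univer_nostop:
  assumes u: "root_res u \<noteq> 0"
  shows "(\<Sum>g\<in>PiE {..<length ts} (\<lambda>i. draft_trees (ts ! i)).
      (\<Prod>i<length ts. child_pdraft u i (g i)) * univer_nostop Mb Ms gtop (Nd ts) (join_lab ts (child_tokens u) g) pt)
    = 1 - (\<Sum>y\<in>UNIV. root_alloc u y)"
proof -
  interpret sequential_acceptance "root_alloc u" "child_tokens u" "length ts"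
    by (rule sequential_acceptance_root[OF u])
  have "(\<Sum>g\<in>PiE {..<length ts} (\<lambda>i. draft_trees (ts ! i)).
      (\<Prod>i<length ts. child_pdraft u i (g i)) * univer_nostop Mb Ms gtop (Nd ts) (join_lab ts (child_tokens u) g) pt)
    = (\<Sum>g\<in>PiE {..<length ts} (\<lambda>i. draft_trees (ts ! i)).
      (\<Prod>i<length ts. child_pdraft u i (g i) * child_nostop u i (g i))) * (1 - residual_accept)"
    by (simp add: univer_nostop_join[OF _ u] prod.distrib sum_distrib_right mult.assoc cong: sum.cong)
  also have "\<dots> = (\<Prod>i<length ts. 1 - accept i) * (1 - residual_accept)"
    unfolding sum_PiE_children[of "\<lambda>i x. child_pdraft u i x * child_nostop u i x"]
    by (intro arg_cong2[where f = "(*)"] prod.cong refl) (simp add: sum_child_nostop[OF u])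
  finally show ?thesis
    by (simp add: sequential_nostop)
qed

lemma sum_children_univer_value:
  assumes u: "root_res u \<noteq> 0" and harmonic: "harmonic_upto Mb (height (Nd ts)) \<Phi>"
  shows "(\<Sum>g\<in>PiE {..<length ts} (\<lambda>i. draft_trees (ts ! i)).
      (\<Prod>i<length ts. child_pdraft u i (g i)) * univer_value Mb Ms gtop (Nd ts) (join_lab ts (child_tokens u) g) pt \<Phi>)
    = (\<Sum>y\<in>UNIV. root_alloc u y * \<Phi> [y])"
proof -
  interpret sequential_acceptance "root_alloc u" "child_tokens u" "length ts"
    by (rule sequential_acceptance_root[OF u])
  let ?K = "residual_accept * (\<Sum>y\<in>UNIV. residual_emit y * \<Phi> [y])"
  have "(\<Sum>g\<in>PiE {..<length ts} (\<lambda>i. draft_trees (ts ! i)).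
      (\<Prod>i<length ts. child_pdraft u i (g i)) * univer_value Mb Ms gtop (Nd ts) (join_lab ts (child_tokens u) g) pt \<Phi>)
    = (\<Sum>g\<in>PiE {..<length ts} (\<lambda>i. draft_trees (ts ! i)). (\<Prod>i<length ts. child_pdraft u i (g i)) *
        ((\<Sum>i<length ts. (\<Prod>j<i. child_nostop u j (g j)) * child_value u \<Phi> i (g i))
         + (\<Prod>j<length ts. child_nostop u j (g j)) * ?K))"
    by (intro sum.cong refl) (simp add: univer_value_join[OF _ u])
  also have "\<dots> = (\<Sum>i<length ts.
        (\<Prod>j<i. \<Sum>x\<in>draft_trees (ts ! j). child_pdraft u j x * child_nostop u j x)
        * (\<Sum>x\<in>draft_trees (ts ! i). child_pdraft u i x * child_value u \<Phi> i x)
        * (\<Prod>j\<in>{Suc i..<length ts}. \<Sum>x\<in>draft_trees (ts ! j). child_pdraft u j x))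
      + (\<Prod>j<length ts. \<Sum>x\<in>draft_trees (ts ! j). child_pdraft u j x * child_nostop u j x) * ?K"
    by (rule sum_PiE_sequential) simp
  also have "\<dots> = (\<Sum>i<length ts. (\<Prod>j<i. 1 - accept j) * (accept i * \<Phi> [child_tokens u i]) * 1)
      + (\<Prod>j<length ts. 1 - accept j) * ?K"
    by (intro arg_cong2[where f = "(+)"] arg_cong2[where f = "(*)"] sum.cong prod.cong refl)
      (simp_all add: sum_child_pdraft sum_child_nostop[OF u] sum_child_value[OF u _ harmonic])
  finally show ?thesis
    by (simp add: sequential_value[of "\<lambda>y. \<Phi> [y]"])
qed

lemma sum_univer_nostop_Nd:
  "(\<Sum>lab\<in>draft_trees (Nd ts). pdraft Ms gtop (Nd ts) lab * univer_nostop Mb Ms gtop (Nd ts) lab pt) = 1 - pt"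
proof -
  have "(\<Sum>lab\<in>draft_trees (Nd ts). pdraft Ms gtop (Nd ts) lab * univer_nostop Mb Ms gtop (Nd ts) lab pt) =
      (\<Sum>u\<in>UNIV. root_res u * (1 - (\<Sum>y\<in>UNIV. root_alloc u y * 1)))"
    unfolding sum_draft_trees_root by (rule sum_root_res_cong) (simp add: sum_children_univer_nostop)
  also have "\<dots> = 1 - pt"
    using sum_root_alloc[of "\<lambda>_. 1"] by (simp add: right_diff_distrib sum_subtractf sum_root_res Mb_sum)
  finally show ?thesis .
qed

lemma sum_univer_value_Nd:
  assumes "harmonic_upto Mb (height (Nd ts)) \<Phi>"
  shows "(\<Sum>lab\<in>draft_trees (Nd ts). pdraft Ms gtop (Nd ts) lab * univer_value Mb Ms gtop (Nd ts) lab pt \<Phi>)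
    = pt * \<Phi> []"
proof -
  have "(\<Sum>lab\<in>draft_trees (Nd ts). pdraft Ms gtop (Nd ts) lab * univer_value Mb Ms gtop (Nd ts) lab pt \<Phi>) =
      (\<Sum>u\<in>UNIV. root_res u * (\<Sum>y\<in>UNIV. root_alloc u y * \<Phi> [y]))"
    unfolding sum_draft_trees_root
    by (rule sum_root_res_cong) (simp add: sum_children_univer_value[OF _ assms])
  also have "\<dots> = pt * \<Phi> []"
    by (simp add: sum_root_alloc harmonic_upto_Nil[OF assms])
  finally show ?thesis .
qed

lemma lossless_invariant_Nd: "lossless_invariant Mb Ms gtop (Nd ts) pt"
  using sum_pdraft_Nd sum_univer_nostop_Nd sum_univer_value_Nd
  by (simp add: lossless_invariant_def)

end

theorem lossless_invariant_holds:
  fixes Mb Ms :: "'a::finite list \<Rightarrow> 'a \<Rightarrow> real"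
  assumes "well_posed Mb Ms gtop t" "0 \<le> pt" "pt \<le> 1"
  shows "lossless_invariant Mb Ms gtop t pt"
  using assms
proof (induction t arbitrary: Mb Ms gtop pt)
  case (Nd ts)
  show ?case
  proof (cases "ts = []")
    case True
    then show ?thesis
      using lossless_invariant_leaf Nd.prems(2,3) by simp
  next
    case False
    interpret lossless_step Mb Ms gtop ts pt
      using False Nd.prems
    proof unfold_locales
      fix i a and q :: real
      assume "i < length ts" "0 \<le> q" "q \<le> 1"
      then show "lossless_invariant (shift_ctx a Mb) (shift_ctx a Ms) (shift_ctx a gtop) (ts ! i) q"
        using Nd.IH[OF nth_mem] well_posed_child[OF Nd.prems(1)] by blast
    qed
    show ?thesis
      by (rule lossless_invariant_Nd)
  qed
qed

section \<open>Weights of the prefixes\<close>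

definition tail_prob :: "'a model \<Rightarrow> 'a list \<Rightarrow> 'a list \<Rightarrow> real" where
  "tail_prob M os w =
     (if w = take (length w) os \<and> length w \<le> length os
      then \<Prod>i\<in>{length w..<length os}. M (take i os) (os ! i) else 0)"

lemma seqprob_take_mult_tail_prob:
  assumes "l \<le> length os"
  shows "seqprob M (take l os) * tail_prob M os (take l os) = seqprob M os"
proof -
  have "seqprob M (take l os) = (\<Prod>i<l. M (take i os) (os ! i))"
    using assms by (simp add: seqprob_def min_def)
  then show ?thesis
    using assms prod.atLeastLessThan_concat[of 0 l "length os" "\<lambda>i. M (take i os) (os ! i)"]
    by (simp add: tail_prob_def seqprob_def lessThan_atLeast0 min_def)
qed

lemma tail_prob_Nil: "tail_prob M os [] = seqprob M os"
  using seqprob_take_mult_tail_prob[of 0 os M] by (simp add: seqprob_def)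

lemma tail_prob_snoc:
  assumes "length w < length os"
  shows "tail_prob M os (w @ [y]) =
    (if w = take (length w) os \<and> y = os ! length w then tail_prob M os (take (Suc (length w)) os) else 0)"
  using assms by (auto simp: tail_prob_def take_Suc_conv_app_nth min_def)

lemma harmonic_tail_prob:
  assumes "n < length os"
  shows "harmonic_upto M n (tail_prob M os)"
  unfolding harmonic_upto_def
proof (intro allI impI)
  fix w :: "'a list"
  assume "length w \<le> n"
  with assms have w: "length w < length os"
    by simp
  show "tail_prob M os w = (\<Sum>y\<in>UNIV. M w y * tail_prob M os (w @ [y]))"
  proof (cases "w = take (length w) os")
    case True
    have "(\<Sum>y\<in>UNIV. M w y * tail_prob M os (w @ [y])) = M w (os ! length w) * tail_prob M os (take (Suc (length w)) os)"
      using True w by (simp add: tail_prob_snoc if_distrib cong: if_cong)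
    also have "\<dots> = tail_prob M os w"
      using True w by (simp add: tail_prob_def prod.atLeast_Suc_lessThan min_def)
    finally show ?thesis ..
  next
    case False
    then have "tail_prob M os w = 0"
      by (simp add: tail_prob_def)
    with False w show ?thesis
      by (simp add: tail_prob_snoc)
  qed
qed

definition output_prob :: "'a::finite model \<Rightarrow> 'a model \<Rightarrow> 'a top_lists \<Rightarrow> topo \<Rightarrow> 'a labelling
    \<Rightarrow> 'a list \<Rightarrow> nat list \<Rightarrow> real" where
  "output_prob Mb Ms gtop t lab os v =
     (if length os = Suc (length v) \<and> take (length v) os = tokpath lab v
      then emit_init Mb Ms gtop t lab 1 v (last os) else 0)"

lemma univer_prob_eq_stopping_value:
  "univer_prob Mb Ms gtop t lab os =
   stopping_value (stop_prob Mb Ms gtop t lab 1) (output_prob Mb Ms gtop t lab os) (postorder t)"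
  by (simp add: univer_prob_def Let_def output_prob_def stopping_value_eq_sum unif_lt_stopq emit_eq_emit_init
      cong: if_cong)

lemma sum_prefixes_output_prob:
  assumes "length v < length os"
  shows "(\<Sum>l\<in>{1..length os}. tail_prob Mb os (take l os) * output_prob Mb Ms gtop t lab (take l os) v)
    = emit_value Mb Ms gtop t lab 1 (tail_prob Mb os) v"
proof -
  have "output_prob Mb Ms gtop t lab (take l os) v = 0" if "l \<in> {1..length os} - {Suc (length v)}" for l
    using that by (simp add: output_prob_def min_def)
  then have "(\<Sum>l\<in>{1..length os}. tail_prob Mb os (take l os) * output_prob Mb Ms gtop t lab (take l os) v) =
      (\<Sum>l\<in>{Suc (length v)}. tail_prob Mb os (take l os) * output_prob Mb Ms gtop t lab (take l os) v)"
    using assms by (intro sum.mono_neutral_right) auto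
  also have "\<dots> = (if tokpath lab v = take (length v) os
      then emit_init Mb Ms gtop t lab 1 v (os ! length v) * tail_prob Mb os (take (Suc (length v)) os) else 0)"
    using assms by (simp add: output_prob_def take_Suc_conv_app_nth min_def)
  also have "\<dots> = emit_value Mb Ms gtop t lab 1 (tail_prob Mb os) v"
    using assms by (simp add: emit_value_def tail_prob_snoc if_distrib cong: if_cong)
  finally show ?thesis .
qed

text \<open>Weighting the prefix \<open>o'\<close> of \<open>o\<close> by \<open>M\<^sub>b(o)/M\<^sub>b(o')\<close>, the conditional probability of completing
  it to \<open>o\<close>, turns the sum over prefixes into the expected value of \<open>tail_prob\<close> at the output.\<close>

lemma sum_prefixes_univer_prob:
  assumes "height t < length os" "seqprob Mb os \<noteq> 0"
  shows "(\<Sum>l\<in>{1..length os}. seqprob Mb os * univer_prob Mb Ms gtop t lab (take l os) / seqprob Mb (take l os))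
    = univer_value Mb Ms gtop t lab 1 (tail_prob Mb os)"
proof -
  have "seqprob Mb os * univer_prob Mb Ms gtop t lab (take l os) / seqprob Mb (take l os)
      = stopping_value (stop_prob Mb Ms gtop t lab 1)
          (\<lambda>v. tail_prob Mb os (take l os) * output_prob Mb Ms gtop t lab (take l os) v) (postorder t)"
    if "l \<in> {1..length os}" for l
  proof -
    have factor: "seqprob Mb os = seqprob Mb (take l os) * tail_prob Mb os (take l os)"
      using that by (intro seqprob_take_mult_tail_prob[symmetric]) simp
    with assms(2) have "seqprob Mb (take l os) \<noteq> 0"
      by auto
    then show ?thesis
      by (simp add: factor univer_prob_eq_stopping_value stopping_value_scale)
  qed
  then have "(\<Sum>l\<in>{1..length os}. seqprob Mb os * univer_prob Mb Ms gtop t lab (take l os) / seqprob Mb (take l os))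
      = stopping_value (stop_prob Mb Ms gtop t lab 1)
          (\<lambda>v. \<Sum>l\<in>{1..length os}. tail_prob Mb os (take l os) * output_prob Mb Ms gtop t lab (take l os) v)
          (postorder t)"
    by (simp add: stopping_value_sum)
  also have "\<dots> = univer_value Mb Ms gtop t lab 1 (tail_prob Mb os)"
    unfolding univer_value_def
    using length_postorder_le assms(1)
    by (intro stopping_value_cong sum_prefixes_output_prob) (meson le_less_trans)
  finally show ?thesis .
qed

theorem corollary1:
  fixes Mb Ms :: "'a::finite list \<Rightarrow> 'a \<Rightarrow> real"
    and gtop :: "'a list \<Rightarrow> nat \<Rightarrow> 'a list"
    and t :: topo and D L :: nat and os :: "'a list"
  assumes Mb_nonneg: "\<forall>ctx x. 0 \<le> Mb ctx x"
    and Mb_sum: "\<forall>ctx. (\<Sum>x\<in>UNIV. Mb ctx x) = 1"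
    and Ms_nonneg: "\<forall>ctx x. 0 \<le> Ms ctx x"
    and Ms_sum: "\<forall>ctx. (\<Sum>x\<in>UNIV. Ms ctx x) = 1"
    and greedy: "\<forall>ctx k. k < card (UNIV :: 'a set) \<longrightarrow>
        length (gtop ctx k) = k \<and> distinct (gtop ctx k)
        \<and> sorted_wrt (\<lambda>x y. Ms ctx y \<le> Ms ctx x) (gtop ctx k)
        \<and> (\<forall>x\<in>set (gtop ctx k). \<forall>y. y \<notin> set (gtop ctx k) \<longrightarrow> Ms ctx y \<le> Ms ctx x)"
    and depth: "height t = D"
    and fanout: "\<forall>v\<in>set (postorder t). nch t v \<le> card (UNIV :: 'a set)"
    and residual_pos: "\<forall>ctx. \<forall>v\<in>set (postorder t). 0 < nch t v \<longrightarrow>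
        0 < (\<Sum>y\<in>UNIV - set (gtop ctx (nch t v - 1)). Ms ctx y)"
    and L: "D + 1 \<le> L"
    and len: "length os = L"
  shows "(\<Sum>lab\<in>draft_trees t. pdraft Ms gtop t lab *
           (\<Sum>l\<in>{1..L}. seqprob Mb os * univer_prob Mb Ms gtop t lab (take l os)
                          / seqprob Mb (take l os)))
         = seqprob Mb os"
proof (cases "seqprob Mb os = 0")
  case False
  have "well_posed Mb Ms gtop t"
    using Mb_nonneg Mb_sum Ms_nonneg greedy fanout residual_pos
    by (simp add: well_posed_def distinct_tops_def)
  moreover have deep: "height t < length os"
    using depth L len by simp
  ultimately have "(\<Sum>lab\<in>draft_trees t. pdraft Ms gtop t lab * univer_value Mb Ms gtop t lab 1 (tail_prob Mb os))
      = tail_prob Mb os []"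
    using lossless_invariant_holds[of Mb Ms gtop t 1] harmonic_tail_prob[OF deep]
    by (simp add: lossless_invariant_def)
  moreover have "(\<Sum>l\<in>{1..L}. seqprob Mb os * univer_prob Mb Ms gtop t lab (take l os) / seqprob Mb (take l os))
      = univer_value Mb Ms gtop t lab 1 (tail_prob Mb os)" for lab
    using sum_prefixes_univer_prob[OF deep False] len by simp
  ultimately show ?thesis
    by (simp add: tail_prob_Nil)
qed simp

end
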